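(* Let $p\ge1$ and let $\mathbf X$ be a random variable with values in $\mathcal R^w_p(V)$ such that $\mathbb E|\langle\mathbf X_{0,T},f\rangle|<\infty$ for every $f\in T(V)$. Then: 1. (compensated moments) For every $k\ge1$ and nonempty words $\tau_1,\dots,\tau_k\in[d]^*$, with $\boldsymbol\tau=(\tau_1,\dots,\tau_k)$, $$\langle\kappa_{\mathbf X},e_{\tau_1}\sqcup\cdots\sqcup e_{\tau_k}\rangle=\sum_{\mathbf a\in\mathrm{Orp}(\boldsymbol\tau)}(-1)^{|\mathbf a|-1}\frac{\mathbf a!}{|\mathbf a|}\mu_{\mathbf X}(\mathbf a).$$ 2. (moment bijection) For every nonempty word $\tau\in[d]^*$, $$\langle\mu_{\mathbf X},e_\tau\rangle=\sum_{\mathbf a\in\mathrm{Orp}(\tau)}\frac{1}{|\mathbf a|!}\prod_{B\in\mathbf a}\langle\kappa_{\mathbf X},e_B\rangle,$$ where $\mathrm{Orp}(\tau)$ is the set of partitions of the positions of $\tau$ into intervals of consecutive positions and $e_B=e_{\tau(p_1)}\otimes\cdots\otimes e_{\tau(p_r)}$ for a block $B=\{p_1<\dots<p_r\}$. 3. (independence) Let $I,J\subseteq[d]$ and suppose the joint law of $(\mathbf X|_I,\mathbf X|_J)$ is determined by the mixed moments $\{\mathbb E[\langle\mathbf X_{0,T},e_{\tau_1}\rangle\langle\mathbf X_{0,T},e_{\tau_2}\rangle]:\tau_1\in I^*\cup\{()\},\tau_2\in J^*\cup\{()\}\}$, in the sense that any pair of random variables with values in $\mathbb R^{I^*}\times\mathbb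 R^{J^*}$ having the same (finite) mixed moments of this form has the same joint law. Then $\mathbf X|_I$ and $\mathbf X|_J$ are independent if and only if $\langle\kappa_{\mathbf X},e_{\tau_1}\sqcup e_{\tau_2}\rangle=0$ for all $\tau_1\in I^*$, $\tau_2\in J^*$.
   Context: Let $V=\mathbb R^d$ with basis $e_1,\dots,e_d$; $[n]=\{1,\dots,n\}$; $[d]^*=\bigcup_{m\ge0}[d]^m$ words, $|\tau|$ length, $e_\tau=e_{i_1}\otimes\cdots\otimes e_{i_m}$, $e_{()}=1$; for $I\subseteq[d]$, $I^*$ is the set of nonempty words with letters in $I$. $T(V)=\bigoplus_mV^{\otimes m}$, $T((V))=\prod_mV^{\otimes m}$ (algebra under $\otimes$), pairing $\langle s,t\rangle=\sum_\tau s_\tau t_\tau$; $\log y=\sum_{n\ge1}\frac{(-1)^{n-1}}{n}(y-1)^{\otimes n}$ for $\langle y,1\rangle=1$. Shuffle $\sqcup$: bilinear extension of $e_{\tau_1}\sqcup e_{\tau_2}=\sum_\sigma e_\sigma$ over interleavings counted with multiplicity. Weakly geometric $p$-rough paths (on some interval $[0,T]$): maps $\mathbf x:\{0\le s\le t\le T\}\to T((V))$ with (i) $\langle\mathbf x_{s,t},1\rangle=1$, $\langle\mathbf x_{s,t},f\sqcup g\rangle=\langle\mathbf x_{s,t},f\rangle\langle\mathbf x_{s,t},g\rangle$ for $f,g\in T(V)$; (ii) $\mathbf x_{s,t}\otimes\mathbf x_{t,u}=\mathbf x_{s,u}$; (iii) $\max_{1\le m\le p}\sup_D(\sum_i|\pi_m\mathbf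 x_{t_i,t_{i+1}}|^{p/m})^{1/p}<\infty$. $\mathcal G^w_p(V)$ is the set of these; $\mathbf x_{0,T}$ is the signature. A continuous path $z:[0,S]\to E$ ($E$ a topological space) is tree-like if $z=\psi\circ\varphi$ for some $\mathbb R$-tree $\mathcal T$, continuous $\varphi:[0,S]\to\mathcal T$ with $\varphi(0)=\varphi(S)$ and map $\psi:\mathcal T\to E$. Two weakly geometric rough paths $\mathbf x$ (on $[0,T]$) and $\mathbf y$ (on $[0,S]$) are tree-like equivalent if the path obtained by running $t\mapsto\mathbf x_{0,t}$ and then the time-reversal of $s\mapsto\mathbf y_{0,s}$, left-translated to start at $\mathbf x_{0,T}$, is tree-like. $\mathcal R^w_p(V)$ is the quotient of $\mathcal G^w_p(V)$ by this equivalence (unparametrised rough paths), topologised via $\mathbf x\mapsto\mathbf x_{0,T}$; the signature $\mathbf X_{0,T}$ is well defined on classes. $\mu_{\mathbf X}=\mathbb E[\mathbf X_{0,T}]$, $\kappa_{\mathbf X}=\log\mu_{\mathbf X}$. $\mathbf X|_I$ denotes the $\mathbb R^{I^*}$-valued random variable $(\langle\mathbf X_{0,T},e_\tau\rangle)_{\tau\in I^*}$ (product $\sigma$-algebra). Ordered partitions: for a finite poset $P$, partitions into nonempty blocks with refinement order, $|\mathbf a|$ the number of blocks; $\mathrm{Orp}(P)=\{\ker f:f:P\to\mathbb N\text{ order-preserving}\}$ ($\ker f$ = nonempty fibres; order-preserving: $x\le y\Rightarrow f(x)\le f(y)$); $\mathbf a!=\#\{f:P\to[|\mathbf a|]\text{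 order-preserving}:\ker f=\mathbf a\}$. Word poset $P_{\boldsymbol\tau}=\{(j,p):j\in[k],p\in[|\tau_j|]\}$ with $(j,p)\le(j',p')$ iff $j=j'$ and $p\le p'$ (positions distinct even if letters repeat); $\mathrm{Orp}(\boldsymbol\tau)=\mathrm{Orp}(P_{\boldsymbol\tau})$. For a block $B$, $B^j=B\cap(\{j\}\times[|\tau_j|])$, $e_{B^j}=e_{\tau_j(p_1)}\otimes\cdots\otimes e_{\tau_j(p_r)}$ for its positions $p_1<\dots<p_r$ ($\tau_j(p)$ the $p$-th letter). Generalised moment $\mu_{\mathbf X}(\mathbf a)=\prod_{B\in\mathbf a}\mathbb E[\prod_{j:B^j\neq\emptyset}\langle\mathbf X_{0,T},e_{B^j}\rangle]$. *)

theory Defs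
  imports "HOL-Probability.Probability"
begin

text \<open>An element of T((V)) is a function from words ('d list) to coefficients;
  e_tau is the indicator of the word tau. Elements of T(V) are those with finite support.\<close>

definition tsupp :: "('d list \<Rightarrow> real) \<Rightarrow> 'd list set" where
  "tsupp f = {w. f w \<noteq> 0}"

definition tfin :: "('d list \<Rightarrow> real) \<Rightarrow> bool" where
  "tfin f \<longleftrightarrow> finite (tsupp f)"

definition ew :: "'d list \<Rightarrow> 'd list \<Rightarrow> real" where
  "ew \<tau> = (\<lambda>w. if w = \<tau> then 1 else 0)"

definition tpair :: "('d list \<Rightarrow> real) \<Rightarrow> ('d list \<Rightarrow> real) \<Rightarrow> real" where
  "tpair s t = (\<Sum>\<tau>\<in>tsupp t. s \<tau> * t \<tau>)"

definition tmul :: "('d list \<Rightarrow> real) \<Rightarrow> ('d list \<Rightarrow> real) \<Rightarrow> 'd list \<Rightarrow> real" where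
  "tmul s t w = (\<Sum>i\<le>length w. s (take i w) * t (drop i w))"

definition tone :: "'d list \<Rightarrow> real" where
  "tone = ew []"

primrec tpow :: "('d list \<Rightarrow> real) \<Rightarrow> nat \<Rightarrow> 'd list \<Rightarrow> real" where
  "tpow y 0 = tone"
| "tpow y (Suc n) = tmul y (tpow y n)"

definition tlog :: "('d list \<Rightarrow> real) \<Rightarrow> 'd list \<Rightarrow> real" where
  "tlog y w = (\<Sum>n. (-1) ^ n / real (Suc n) * tpow (\<lambda>v. y v - tone v) (Suc n) w)"

text \<open>Number of interleavings (with multiplicity) of u and v giving w.\<close>
fun shc :: "'d list \<Rightarrow> 'd list \<Rightarrow> 'd list \<Rightarrow> nat" where
  "shc [] v w = (if w = v then 1 else 0)"
| "shc (x # u) [] w = (if w = x # u then 1 else 0)"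
| "shc (x # u) (y # v) [] = 0"
| "shc (x # u) (y # v) (z # w) =
     (if z = x then shc u (y # v) w else 0) + (if z = y then shc (x # u) v w else 0)"

definition shuffle :: "('d list \<Rightarrow> real) \<Rightarrow> ('d list \<Rightarrow> real) \<Rightarrow> 'd list \<Rightarrow> real" where
  "shuffle f g w = (\<Sum>(u, v)\<in>{(u, v). length u + length v = length w}.
                      f u * g v * real (shc u v w))"

fun shuffle_list :: "('d list \<Rightarrow> real) list \<Rightarrow> 'd list \<Rightarrow> real" where
  "shuffle_list [] = ew []"
| "shuffle_list [f] = f"
| "shuffle_list (f # g # fs) = shuffle f (shuffle_list (g # fs))"

definition tnorm :: "nat \<Rightarrow> ('d::finite list \<Rightarrow> real) \<Rightarrow> real" where
  "tnorm m y = sqrt (\<Sum>w\<in>{w. length w = m}. (y w)\<^sup>2)"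

definition wg_rough_path :: "real \<Rightarrow> real \<Rightarrow> (real \<Rightarrow> real \<Rightarrow> 'd::finite list \<Rightarrow> real) \<Rightarrow> bool" where
  "wg_rough_path p T x \<longleftrightarrow>
     (\<forall>w. continuous_on {(s, t). 0 \<le> s \<and> s \<le> t \<and> t \<le> T} (\<lambda>(s, t). x s t w)) \<and>
     (\<forall>s t. 0 \<le> s \<and> s \<le> t \<and> t \<le> T \<longrightarrow>
        x s t [] = 1 \<and>
        (\<forall>f g. tfin f \<and> tfin g \<longrightarrow>
           tpair (x s t) (shuffle f g) = tpair (x s t) f * tpair (x s t) g)) \<and>
     (\<forall>s t u. 0 \<le> s \<and> s \<le> t \<and> t \<le> u \<and> u \<le> T \<longrightarrow> tmul (x s t) (x t u) = x s u) \<and>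
     (\<forall>m::nat. 1 \<le> m \<and> real m \<le> p \<longrightarrow>
        (\<exists>C. \<forall>(n::nat) (t::nat \<Rightarrow> real).
           t 0 = 0 \<and> t n = T \<and> (\<forall>i<n. t i < t (Suc i)) \<longrightarrow>
           (\<Sum>i<n. tnorm m (x (t i) (t (Suc i))) powr (p / real m)) \<le> C))"

text \<open>The set of signatures x_{0,T} of weakly geometric p-rough paths (= signatures of
  elements of the unparametrised space R^w_p(V), on which the signature is well defined).\<close>
definition wg_signatures :: "real \<Rightarrow> ('d::finite list \<Rightarrow> real) set" where
  "wg_signatures p = {x 0 T | x T. 0 \<le> T \<and> wg_rough_path p T x}"

definition kernel :: "'a set \<Rightarrow> ('a \<Rightarrow> nat) \<Rightarrow> 'a set set" where
  "kernel P f = (\<lambda>n. {x\<in>P. f x = n}) ` (f ` P)"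

definition order_pres :: "'a set \<Rightarrow> ('a \<Rightarrow> 'a \<Rightarrow> bool) \<Rightarrow> ('a \<Rightarrow> nat) \<Rightarrow> bool" where
  "order_pres P le f \<longleftrightarrow> (\<forall>x\<in>P. \<forall>y\<in>P. le x y \<longrightarrow> f x \<le> f y)"

definition Orp :: "'a set \<Rightarrow> ('a \<Rightarrow> 'a \<Rightarrow> bool) \<Rightarrow> 'a set set set" where
  "Orp P le = {kernel P f | f. order_pres P le f}"

definition opfact :: "'a set \<Rightarrow> ('a \<Rightarrow> 'a \<Rightarrow> bool) \<Rightarrow> 'a set set \<Rightarrow> nat" where
  "opfact P le a = card {f \<in> P \<rightarrow>\<^sub>E {1..card a}. order_pres P le f \<and> kernel P f = a}"

text \<open>Word poset of a tuple of words (0-indexed positions (j,p)).\<close>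
definition wposet :: "'d list list \<Rightarrow> (nat \<times> nat) set" where
  "wposet taus = {(j, p). j < length taus \<and> p < length (taus ! j)}"

definition wle :: "nat \<times> nat \<Rightarrow> nat \<times> nat \<Rightarrow> bool" where
  "wle a b \<longleftrightarrow> fst a = fst b \<and> snd a \<le> snd b"

definition blockword :: "'d list list \<Rightarrow> (nat \<times> nat) set \<Rightarrow> nat \<Rightarrow> 'd list" where
  "blockword taus B j = map (\<lambda>p. taus ! j ! p) (sorted_list_of_set {p. (j, p) \<in> B})"

definition genmom :: "'a measure \<Rightarrow> ('a \<Rightarrow> 'd list \<Rightarrow> real) \<Rightarrow> 'd list list \<Rightarrow> (nat \<times> nat) set set \<Rightarrow> real" where
  "genmom M S taus a = (\<Prod>B\<in>a. integral\<^sup>L M (\<lambda>\<omega>.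
      \<Prod>j\<in>{j. j < length taus \<and> (\<exists>p. (j, p) \<in> B)}. S \<omega> (blockword taus B j)))"

definition words_in :: "'d set \<Rightarrow> 'd list set" where
  "words_in I = {\<tau>. \<tau> \<noteq> [] \<and> set \<tau> \<subseteq> I}"

definition mixfun :: "'d list \<Rightarrow> 'd list \<Rightarrow> ('d list \<Rightarrow> real) \<times> ('d list \<Rightarrow> real) \<Rightarrow> real" where
  "mixfun \<tau>1 \<tau>2 yz = (if \<tau>1 = [] then 1 else fst yz \<tau>1) * (if \<tau>2 = [] then 1 else snd yz \<tau>2)"

end

theory Submission
  imports Defs "HOL-Computational_Algebra.Formal_Power_Series"
begin

text \<open>
  Signatures are group-like: pairing one with a shuffle product of words gives the product of its
  coefficients, so pairings of the expected signature \<open>\<mu>\<close> with shuffle products are mixed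
  moments. Since shuffling is compatible with deconcatenation, the pairing of the concatenation
  power \<open>(\<mu> - 1)\<^sup>n\<close> with a shuffle of words is a sum, over the order-preserving maps from
  the word poset onto \<open>{1..n}\<close>, of products of generalised moments of the fibres; grouping
  these maps by their kernels yields the compensated moments of \<open>\<kappa> = log \<mu>\<close>. Conversely
  \<open>\<mu> = exp \<kappa>\<close>, since substitution into formal power series is multiplicative and
  \<open>exp \<circ> log = 1 + X\<close>; for a single word the poset is a chain, on which every ordered
  partition is the kernel of exactly one order-preserving surjection. For two words, induction on
  the total length shows that \<open>\<langle>\<mu>, e\<^sub>u \<squnion> e\<^sub>v\<rangle> = \<mu>\<^sub>u \<mu>\<^sub>v\<close> for all
  \<open>u\<close>, \<open>v\<close> exactly when \<open>\<langle>\<kappa>, e\<^sub>u \<squnion> e\<^sub>v\<rangle>\<close> vanishes for nonempty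
  \<open>u\<close>, \<open>v\<close>. Factorised mixed moments are those of the product of the two marginal laws,
  and the determinacy hypothesis turns this into independence.
\<close>

section \<open>Shuffles and deconcatenation\<close>

lemma shc_Nil_right: "shc a [] w = (if w = a then 1 else 0)"
  by (cases a) auto

lemma shc_Nil_Nil: "shc a b [] = (if a = [] \<and> b = [] then 1 else 0)"
  by (cases a; cases b) auto

lemma shc_Cons_word:
  "shc a b (z # w) =
     (if a \<noteq> [] \<and> hd a = z then shc (tl a) b w else 0) +
     (if b \<noteq> [] \<and> hd b = z then shc a (tl b) w else 0)"
  by (cases a; cases b) (auto simp: shc_Nil_right)

lemma shc_deconcat:
  "shc a b (u @ v) = (\<Sum>i\<le>length a. \<Sum>j\<le>length b.
      shc (take i a) (take j b) u * shc (drop i a) (drop j b) v)"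
proof (induction u arbitrary: a b)
  case Nil
  have "(\<Sum>i\<le>length a. \<Sum>j\<le>length b. shc (take i a) (take j b) [] * shc (drop i a) (drop j b) v)
      = (\<Sum>i\<le>length a. \<Sum>j\<le>length b. if i = 0 \<and> j = 0 then shc a b v else 0)"
    by (intro sum.cong refl) (auto simp: shc_Nil_Nil)
  also have "\<dots> = (\<Sum>i\<le>length a. if i = 0 then shc a b v else 0)"
    by (intro sum.cong refl) (cases "i = 0"; simp)
  finally show ?case by simp
next
  case (Cons z u)
  let ?F = "\<lambda>a b. \<Sum>i\<le>length a. \<Sum>j\<le>length b. shc (take i a) (take j b) u * shc (drop i a) (drop j b) v"
  let ?L = "\<Sum>i\<le>length a. \<Sum>j\<le>length b.
      (if take i a \<noteq> [] \<and> hd (take i a) = z then shc (tl (take i a)) (take j b) u else 0) *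
      shc (drop i a) (drop j b) v"
  let ?R = "\<Sum>i\<le>length a. \<Sum>j\<le>length b.
      (if take j b \<noteq> [] \<and> hd (take j b) = z then shc (take i a) (tl (take j b)) u else 0) *
      shc (drop i a) (drop j b) v"
  have left: "?L = (if a \<noteq> [] \<and> hd a = z then ?F (tl a) b else 0)"
    by (cases a) (simp_all add: sum.atMost_Suc_shift del: sum.atMost_Suc)
  have right: "?R = (if b \<noteq> [] \<and> hd b = z then ?F a (tl b) else 0)"
    by (cases b) (simp_all add: sum.atMost_Suc_shift del: sum.atMost_Suc)
  have "(\<Sum>i\<le>length a. \<Sum>j\<le>length b. shc (take i a) (take j b) (z # u) * shc (drop i a) (drop j b) v)
      = ?L + ?R"
    by (simp only: shc_Cons_word distrib_right sum.distrib)
  also have "\<dots> = shc a b ((z # u) @ v)"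
    unfolding left right by (simp add: shc_Cons_word Cons.IH)
  finally show ?case ..
qed

lemma shc_length: "shc a b w \<noteq> 0 \<Longrightarrow> length w = length a + length b"
  by (induction a b w rule: shc.induct) (auto split: if_splits)

definition words_upto :: "nat \<Rightarrow> 'd list set" where "words_upto n = {w. length w \<le> n}"

definition words_len :: "nat \<Rightarrow> 'd list set" where "words_len n = {w. length w = n}"

lemma mem_words_upto: "w \<in> words_upto n \<longleftrightarrow> length w \<le> n"
  by (simp add: words_upto_def)

lemma finite_words_upto[simp]: "finite (words_upto n :: 'd::finite list set)"
  using finite_lists_length_le[of "UNIV :: 'd set" n] by (simp add: words_upto_def)

lemma finite_words_len[simp]: "finite (words_len n :: 'd::finite list set)"
  by (rule finite_subset[OF _ finite_words_upto[of n]]) (auto simp: words_len_def words_upto_def)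

lemma finite_length_pairs[simp]: "finite {(u::'d::finite list, v::'d list). length u + length v = n}"
  by (rule finite_subset[of _ "words_upto n \<times> words_upto n"]) (auto simp: mem_words_upto)

lemma sum_words_upto_deconcat:
  fixes g :: "'d::finite list \<Rightarrow> 'd list \<Rightarrow> 'a::comm_monoid_add"
  assumes "\<And>u v. g u v \<noteq> 0 \<Longrightarrow> length u + length v \<le> N"
  shows "(\<Sum>x\<in>words_upto N. \<Sum>j\<le>length x. g (take j x) (drop j x))
       = (\<Sum>u\<in>words_upto N. \<Sum>v\<in>words_upto N. g u v)"
proof -
  have "(\<Sum>x\<in>words_upto N. \<Sum>j\<le>length x. g (take j x) (drop j x))
      = (\<Sum>(x, j)\<in>Sigma (words_upto N) (\<lambda>x. {..length x}). g (take j x) (drop j x))"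
    by (simp add: sum.Sigma)
  also have "\<dots> = (\<Sum>(u, v)\<in>{(u, v). length u + length v \<le> N}. g u v)"
    by (rule sum.reindex_bij_witness[where i = "\<lambda>(u, v). (u @ v, length u)"
          and j = "\<lambda>(x, j). (take j x, drop j x)"]) (auto simp: words_upto_def)
  also have "\<dots> = (\<Sum>(u, v)\<in>words_upto N \<times> words_upto N. g u v)"
    by (rule sum.mono_neutral_left) (use assms in \<open>auto simp: mem_words_upto\<close>)
  finally show ?thesis
    by (simp add: sum.cartesian_product)
qed

lemma sum_words_len_deconcat:
  fixes g :: "'d::finite list \<Rightarrow> 'd list \<Rightarrow> 'a::comm_monoid_add"
  shows "(\<Sum>w\<in>words_len L. \<Sum>i\<le>length w. g (take i w) (drop i w))
       = (\<Sum>(u, v)\<in>{(u, v). length u + length v = L}. g u v)"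
proof -
  have "(\<Sum>w\<in>words_len L. \<Sum>i\<le>length w. g (take i w) (drop i w))
      = (\<Sum>(w, i)\<in>Sigma (words_len L) (\<lambda>w. {..length w}). g (take i w) (drop i w))"
    by (simp add: sum.Sigma)
  also have "\<dots> = (\<Sum>(u, v)\<in>{(u, v). length u + length v = L}. g u v)"
    by (rule sum.reindex_bij_witness[where i = "\<lambda>(u, v). (u @ v, length u)"
          and j = "\<lambda>(w, i). (take i w, drop i w)"]) (auto simp: words_len_def)
  finally show ?thesis .
qed

lemma shuffle_ew:
  fixes h :: "'d::finite list \<Rightarrow> real"
  assumes "length w \<le> N"
  shows "shuffle (ew \<tau>) h w = (\<Sum>x\<in>words_upto N. h x * real (shc \<tau> x w))"
proof -
  let ?S = "{(u::'d list, v::'d list). length u + length v = length w}"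
  have "shuffle (ew \<tau>) h w = (\<Sum>p\<in>?S. if fst p = \<tau> then h (snd p) * real (shc \<tau> (snd p) w) else 0)"
    unfolding shuffle_def by (intro sum.cong refl) (auto simp: ew_def)
  also have "\<dots> = (\<Sum>p\<in>{p\<in>?S. fst p = \<tau>}. h (snd p) * real (shc \<tau> (snd p) w))"
    by (rule sum.inter_filter[symmetric]) simp
  also have "{p\<in>?S. fst p = \<tau>} = Pair \<tau> ` {v. length \<tau> + length v = length w}" by auto
  also have "(\<Sum>p\<in>Pair \<tau> ` {v. length \<tau> + length v = length w}. h (snd p) * real (shc \<tau> (snd p) w))
     = (\<Sum>v\<in>{v. length \<tau> + length v = length w}. h v * real (shc \<tau> v w))"
    by (subst sum.reindex) (auto simp: inj_on_def)
  also have "\<dots> = (\<Sum>x\<in>words_upto N. h x * real (shc \<tau> x w))"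
    by (rule sum.mono_neutral_left) (use assms shc_length in \<open>fastforce simp: mem_words_upto\<close>)+
  finally show ?thesis .
qed

lemma shuffle_ew_Nil_right: "shuffle (ew \<tau>) (ew []) = (ew \<tau> :: 'd::finite list \<Rightarrow> real)"
proof
  fix w :: "'d list"
  have "shuffle (ew \<tau>) (ew []) w = (\<Sum>x\<in>words_upto (length w). ew [] x * real (shc \<tau> x w))"
    by (rule shuffle_ew) simp
  also have "\<dots> = (\<Sum>x::'d list\<in>words_upto (length w). if x = [] then real (shc \<tau> [] w) else 0)"
    by (intro sum.cong refl) (auto simp: ew_def)
  also have "\<dots> = ew \<tau> w"
    by (simp add: mem_words_upto shc_Nil_right ew_def)
  finally show "shuffle (ew \<tau>) (ew []) w = ew \<tau> w" .
qed

lemma shuffle_ew_Nil_left: "shuffle (ew []) h = (h :: 'd::finite list \<Rightarrow> real)"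
proof
  fix w :: "'d list"
  have "shuffle (ew []) h w = (\<Sum>x\<in>words_upto (length w). h x * real (shc [] x w))"
    by (rule shuffle_ew) simp
  also have "\<dots> = (\<Sum>x\<in>words_upto (length w). if x = w then h w else 0)"
    by (intro sum.cong refl) auto
  also have "\<dots> = h w" by (simp add: mem_words_upto)
  finally show "shuffle (ew []) h w = h w" .
qed

definition shuffle_words :: "'d list list \<Rightarrow> 'd list \<Rightarrow> real" where
  "shuffle_words ws = shuffle_list (map ew ws)"

lemma shuffle_words_Nil[simp]: "shuffle_words [] = ew []"
  by (simp add: shuffle_words_def)

lemma shuffle_words_Cons:
  "shuffle_words (\<tau> # ws) = shuffle (ew \<tau>) (shuffle_words ws :: 'd::finite list \<Rightarrow> real)"
  by (cases ws) (simp_all add: shuffle_words_def shuffle_ew_Nil_right)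

definition splits :: "'d list list \<Rightarrow> nat list set" where
  "splits ws = {c. length c = length ws \<and> (\<forall>j<length ws. c ! j \<le> length (ws ! j))}"

definition takes :: "nat list \<Rightarrow> 'd list list \<Rightarrow> 'd list list" where
  "takes c ws = map (\<lambda>(i, w). take i w) (zip c ws)"

definition drops :: "nat list \<Rightarrow> 'd list list \<Rightarrow> 'd list list" where
  "drops c ws = map (\<lambda>(i, w). drop i w) (zip c ws)"

lemma splits_Nil[simp]: "splits [] = {[]}" by (auto simp: splits_def)

lemma splits_Cons: "splits (\<tau> # ws) = (\<lambda>(i, c). i # c) ` ({..length \<tau>} \<times> splits ws)"
proof (intro set_eqI iffI)
  fix c assume "c \<in> splits (\<tau> # ws)"
  then obtain i c' where "c = i # c'" by (cases c) (auto simp: splits_def)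
  with \<open>c \<in> splits (\<tau> # ws)\<close> show "c \<in> (\<lambda>(i, c). i # c) ` ({..length \<tau>} \<times> splits ws)"
    by (force simp: splits_def image_iff)
next
  fix c assume "c \<in> (\<lambda>(i, c). i # c) ` ({..length \<tau>} \<times> splits ws)"
  then show "c \<in> splits (\<tau> # ws)"
    by (auto simp: splits_def nth_Cons split: nat.splits)
qed

lemma finite_splits[simp]: "finite (splits ws)"
  by (induction ws) (auto simp: splits_Cons)

lemma sum_splits_Cons:
  "(\<Sum>c\<in>splits (\<tau> # ws). g c) = (\<Sum>i\<le>length \<tau>. \<Sum>c\<in>splits ws. g (i # c))"
  by (simp add: splits_Cons sum.reindex inj_on_def sum.cartesian_product case_prod_unfold)

lemma takes_Cons[simp]: "takes (i # c) (\<tau> # ws) = take i \<tau> # takes c ws"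
  by (simp add: takes_def)

lemma drops_Cons[simp]: "drops (i # c) (\<tau> # ws) = drop i \<tau> # drops c ws"
  by (simp add: drops_def)

lemma takes_Nil[simp]: "takes [] [] = []" by (simp add: takes_def)

lemma drops_Nil[simp]: "drops [] [] = []" by (simp add: drops_def)

lemma shuffle_words_deconcat:
  fixes ws :: "'d::finite list list"
  shows "shuffle_words ws (u @ v) =
    (\<Sum>c\<in>splits ws. shuffle_words (takes c ws) u * shuffle_words (drops c ws) v)"
proof (induction ws arbitrary: u v)
  case Nil
  then show ?case by (simp add: ew_def)
next
  case (Cons \<tau> ws)
  define N where "N = length u + length v"
  let ?A = "\<lambda>i x. real (shc (take i \<tau>) x u)" and ?B = "\<lambda>i x. real (shc (drop i \<tau>) x v)"
  let ?g = "\<lambda>i x1 x2. shuffle_words ws (x1 @ x2) * (?A i x1 * ?B i x2)"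
  have "shuffle_words (\<tau> # ws) (u @ v) = (\<Sum>x\<in>words_upto N. shuffle_words ws x * real (shc \<tau> x (u @ v)))"
    by (simp add: shuffle_words_Cons N_def shuffle_ew)
  also have "\<dots> = (\<Sum>x\<in>words_upto N. \<Sum>i\<le>length \<tau>. \<Sum>j\<le>length x. ?g i (take j x) (drop j x))"
    by (simp add: shc_deconcat sum_distrib_left)
  also have "\<dots> = (\<Sum>i\<le>length \<tau>. \<Sum>x\<in>words_upto N. \<Sum>j\<le>length x. ?g i (take j x) (drop j x))"
    by (rule sum.swap)
  also have "\<dots> = (\<Sum>i\<le>length \<tau>. \<Sum>x1\<in>words_upto N. \<Sum>x2\<in>words_upto N. ?g i x1 x2)"
    by (rule sum.cong[OF refl], rule sum_words_upto_deconcat) (auto simp: N_def dest!: shc_length[OF gr_implies_not0])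
  also have "\<dots> = (\<Sum>i\<le>length \<tau>. \<Sum>c\<in>splits ws.
      (\<Sum>x1\<in>words_upto N. shuffle_words (takes c ws) x1 * ?A i x1) *
      (\<Sum>x2\<in>words_upto N. shuffle_words (drops c ws) x2 * ?B i x2))"
    by (simp add: Cons.IH sum_distrib_left sum_distrib_right sum.swap[where A = "splits ws"] mult_ac)
  also have "\<dots> = (\<Sum>c\<in>splits (\<tau> # ws).
      shuffle_words (takes c (\<tau> # ws)) u * shuffle_words (drops c (\<tau> # ws)) v)"
    by (simp add: sum_splits_Cons shuffle_words_Cons N_def shuffle_ew[of u "length u + length v"]
        shuffle_ew[of v "length u + length v"])
  finally show ?case .
qed

section \<open>Pairing with shuffle products\<close>

definition total_length :: "'d list list \<Rightarrow> nat" where "total_length ws = sum_list (map length ws)"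

lemma total_length_Cons[simp]: "total_length (\<tau> # ws) = length \<tau> + total_length ws"
  by (simp add: total_length_def)

lemma total_length_Nil[simp]: "total_length [] = 0" by (simp add: total_length_def)

lemma shuffle_words_support:
  fixes ws :: "'d::finite list list"
  shows "shuffle_words ws w \<noteq> 0 \<Longrightarrow> length w = total_length ws"
proof (induction ws arbitrary: w)
  case Nil
  then show ?case by (simp add: ew_def split: if_splits)
next
  case (Cons \<tau> ws)
  have "shuffle_words (\<tau> # ws) w = (\<Sum>x\<in>words_upto (length w). shuffle_words ws x * real (shc \<tau> x w))"
    by (simp add: shuffle_words_Cons shuffle_ew)
  with Cons.prems obtain x where "shuffle_words ws x \<noteq> 0" "shc \<tau> x w \<noteq> 0"
    by (metis (no_types, lifting) mult_eq_0_iff of_nat_0 sum.neutral)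
  with Cons.IH shc_length show ?case by fastforce
qed

lemma shuffle_words_all_Nil: "(\<forall>\<tau>\<in>set ws. \<tau> = []) \<Longrightarrow> shuffle_words ws = (ew [] :: 'd::finite list \<Rightarrow> real)"
  by (induction ws) (auto simp: shuffle_words_Cons shuffle_ew_Nil_left)

lemma tfin_shuffle_words: "tfin (shuffle_words (ws :: 'd::finite list list))"
  unfolding tfin_def tsupp_def
  by (rule finite_subset[OF _ finite_words_len[of "total_length ws"]])
    (auto simp: words_len_def dest: shuffle_words_support)

lemma tfin_ew: "tfin (ew \<tau>)"
  unfolding tfin_def tsupp_def ew_def by (rule finite_subset[of _ "{\<tau>}"]) auto

text \<open>\<open>pair_shuffles y ws\<close> is \<open>\<langle>y, e\<^sub>w\<^sub>1 \<squnion> \<dots> \<squnion> e\<^sub>w\<^sub>k\<rangle>\<close> for \<open>ws = [w\<^sub>1, \<dots>, w\<^sub>k]\<close>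
  (\<open>tpair_shuffle_words\<close>), summed over the only length of words that can occur.\<close>

definition pair_shuffles :: "('d list \<Rightarrow> real) \<Rightarrow> 'd list list \<Rightarrow> real" where
  "pair_shuffles y ws = (\<Sum>w\<in>words_len (total_length ws). y w * shuffle_words ws w)"

lemma tpair_shuffle_words: "tpair y (shuffle_words ws) = pair_shuffles y (ws :: 'd::finite list list)"
  unfolding tpair_def pair_shuffles_def
proof (rule sum.mono_neutral_left)
  show "finite (words_len (total_length ws) :: 'd list set)" by simp
  show "tsupp (shuffle_words ws) \<subseteq> words_len (total_length ws)"
    by (auto simp: tsupp_def words_len_def dest: shuffle_words_support)
  show "\<forall>i\<in>words_len (total_length ws) - tsupp (shuffle_words ws). y i * shuffle_words ws i = 0"
    by (auto simp: tsupp_def)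
qed

lemma tpair_ew: "tpair y (ew \<tau>) = y \<tau>"
proof -
  have "tsupp (ew \<tau>) = {\<tau>}" by (auto simp: tsupp_def ew_def)
  then show ?thesis by (simp add: tpair_def ew_def)
qed

lemma pair_shuffles_single: "pair_shuffles y [\<tau>] = y (\<tau>::'d::finite list)"
proof -
  have "shuffle_words [\<tau>] = ew \<tau>" by (simp add: shuffle_words_def)
  then show ?thesis using tpair_shuffle_words[of y "[\<tau>]"] tpair_ew by metis
qed

lemma pair_shuffles_tone: "pair_shuffles tone ws = (if \<forall>\<tau>\<in>set ws. \<tau> = [] then 1 else 0)"
  for ws :: "'d::finite list list"
proof (cases "\<forall>\<tau>\<in>set ws. \<tau> = []")
  case True
  then have "total_length ws = 0" by (induction ws) auto
  then show ?thesis using True by (simp add: pair_shuffles_def shuffle_words_all_Nil words_len_def tone_def ew_def)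
next
  case False
  then have "total_length ws \<noteq> 0" by (induction ws) auto
  then have "\<forall>w\<in>words_len (total_length ws). tone w = 0" by (auto simp: words_len_def tone_def ew_def)
  then have "pair_shuffles tone ws = 0" unfolding pair_shuffles_def by (intro sum.neutral) auto
  then show ?thesis using False by simp
qed

lemma pair_shuffles_sum: "finite A \<Longrightarrow> pair_shuffles (\<lambda>w. \<Sum>n\<in>A. f n w) ws = (\<Sum>n\<in>A. pair_shuffles (f n) ws)"
  by (simp add: pair_shuffles_def sum_distrib_right sum.swap[of _ A])

lemma pair_shuffles_scale: "pair_shuffles (\<lambda>w. a * f w) ws = a * pair_shuffles f ws"
  by (simp add: pair_shuffles_def sum_distrib_left mult_ac)

lemma pair_shuffles_diff: "pair_shuffles (\<lambda>w. f w - g w) ws = pair_shuffles f ws - pair_shuffles g ws"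
  by (simp add: pair_shuffles_def left_diff_distrib sum_subtractf)

lemma pair_shuffles_grouplike:
  fixes x :: "'d::finite list \<Rightarrow> real"
  assumes x0: "x [] = 1" and ch: "\<And>f g. tfin f \<Longrightarrow> tfin g \<Longrightarrow> tpair x (shuffle f g) = tpair x f * tpair x g"
  shows "pair_shuffles x ws = prod_list (map x ws)"
proof (induction ws)
  case Nil
  then show ?case using tpair_shuffle_words[of x "[]"] by (simp add: tpair_ew x0)
next
  case (Cons \<tau> ws)
  have "pair_shuffles x (\<tau> # ws) = tpair x (shuffle (ew \<tau>) (shuffle_words ws))"
    by (simp add: tpair_shuffle_words[symmetric] shuffle_words_Cons)
  also have "\<dots> = x \<tau> * pair_shuffles x ws" by (simp add: ch tfin_ew tfin_shuffle_words tpair_ew tpair_shuffle_words)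
  finally show ?case using Cons by simp
qed

lemma total_length_takes_drops:
  "c \<in> splits ws \<Longrightarrow> total_length (takes c ws) + total_length (drops c ws) = total_length ws"
proof (induction ws arbitrary: c)
  case Nil then show ?case by (simp add: takes_def drops_def)
next
  case (Cons \<tau> ws)
  then obtain i c' where "c = i # c'" "i \<le> length \<tau>" "c' \<in> splits ws" by (auto simp: splits_Cons)
  with Cons.IH show ?case by simp
qed

lemma sum_length_pairs_support:
  fixes F :: "'d::finite list \<Rightarrow> 'd list \<Rightarrow> real"
  assumes "a + b = L" and "\<And>u v. F u v \<noteq> 0 \<Longrightarrow> length u = a \<and> length v = b"
  shows "(\<Sum>(u, v)\<in>{(u::'d list, v::'d list). length u + length v = L}. F u v) =
    (\<Sum>u\<in>words_len a. \<Sum>v\<in>words_len b. F u v)"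
proof -
  have "(\<Sum>(u, v)\<in>{(u::'d list, v::'d list). length u + length v = L}. F u v) =
      (\<Sum>(u, v)\<in>words_len a \<times> words_len b. F u v)"
  proof (rule sum.mono_neutral_right)
    show "words_len a \<times> words_len b \<subseteq> {(u::'d list, v::'d list). length u + length v = L}"
      using assms(1) by (auto simp: words_len_def)
    show "\<forall>i\<in>{(u::'d list, v::'d list). length u + length v = L} - words_len a \<times> words_len b.
        (case i of (u, v) \<Rightarrow> F u v) = 0"
      using assms(2) by (auto simp: words_len_def)
  qed simp
  then show ?thesis by (simp add: sum.cartesian_product)
qed

lemma pair_shuffles_tmul:
  fixes y z :: "'d::finite list \<Rightarrow> real"
  shows "pair_shuffles (tmul y z) ws =
    (\<Sum>c\<in>splits ws. pair_shuffles y (takes c ws) * pair_shuffles z (drops c ws))"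
proof -
  define L where "L = total_length ws"
  let ?P = "{(u::'d list, v::'d list). length u + length v = L}"
  let ?h = "\<lambda>c u v. y u * z v * (shuffle_words (takes c ws) u * shuffle_words (drops c ws) v)"
  have "pair_shuffles (tmul y z) ws = (\<Sum>w\<in>words_len L. \<Sum>i\<le>length w.
      y (take i w) * z (drop i w) * shuffle_words ws (take i w @ drop i w))"
    by (simp add: pair_shuffles_def tmul_def L_def sum_distrib_right)
  also have "\<dots> = (\<Sum>(u, v)\<in>?P. y u * z v * shuffle_words ws (u @ v))"
    by (rule sum_words_len_deconcat)
  also have "\<dots> = (\<Sum>(u, v)\<in>?P. \<Sum>c\<in>splits ws. ?h c u v)"
    by (simp add: shuffle_words_deconcat sum_distrib_left)
  also have "\<dots> = (\<Sum>c\<in>splits ws. \<Sum>(u, v)\<in>?P. ?h c u v)"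
    by (subst sum.swap) (simp add: case_prod_unfold)
  also have "\<dots> = (\<Sum>c\<in>splits ws. pair_shuffles y (takes c ws) * pair_shuffles z (drops c ws))"
  proof (rule sum.cong[OF refl])
    fix c assume c: "c \<in> splits ws"
    have "(\<Sum>(u, v)\<in>?P. ?h c u v)
       = (\<Sum>u\<in>words_len (total_length (takes c ws)). \<Sum>v\<in>words_len (total_length (drops c ws)). ?h c u v)"
      by (rule sum_length_pairs_support)
        (auto simp: L_def total_length_takes_drops[OF c] dest: shuffle_words_support)
    also have "\<dots> = pair_shuffles y (takes c ws) * pair_shuffles z (drops c ws)"
      by (simp add: pair_shuffles_def sum_product mult_ac)
    finally show "(\<Sum>(u, v)\<in>?P. ?h c u v) = pair_shuffles y (takes c ws) * pair_shuffles z (drops c ws)" .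
  qed
  finally show ?thesis .
qed

lemma pair_shuffles_cong:
  "(\<And>w. length w = total_length ws \<Longrightarrow> f w = g w) \<Longrightarrow> pair_shuffles f ws = pair_shuffles g ws"
  unfolding pair_shuffles_def by (intro sum.cong refl) (auto simp: words_len_def)

lemma pair_shuffles_all_Nil: "(\<forall>\<tau>\<in>set ws. \<tau> = []) \<Longrightarrow> pair_shuffles \<mu> ws = \<mu> [] "
  for ws :: "'d::finite list list"
proof -
  assume A: "\<forall>\<tau>\<in>set ws. \<tau> = []"
  then have "total_length ws = 0" by (induction ws) auto
  then show ?thesis using A by (simp add: pair_shuffles_def shuffle_words_all_Nil words_len_def ew_def)
qed

lemma pair_shuffles_Nil_left: "pair_shuffles y [[], v] = y (v :: 'd::finite list)"
proof -
  have "shuffle_words [[], v] = shuffle_words [v]" by (simp add: shuffle_words_Cons shuffle_ew_Nil_left)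
  then show ?thesis by (metis tpair_shuffle_words pair_shuffles_single)
qed

lemma pair_shuffles_Nil_right: "pair_shuffles y [u, []] = y (u :: 'd::finite list)"
proof -
  have "shuffle_words [u, []] = shuffle_words [u]" by (simp add: shuffle_words_Cons shuffle_ew_Nil_right)
  then show ?thesis by (metis tpair_shuffle_words pair_shuffles_single)
qed

lemma tpair_shuffle_ew_ew:
  "tpair y (shuffle (ew \<tau>1) (ew \<tau>2)) = pair_shuffles y [\<tau>1, \<tau>2 :: 'd::finite list]"
proof -
  have "shuffle_words [\<tau>1, \<tau>2] = shuffle (ew \<tau>1) (ew \<tau>2)" by (simp add: shuffle_words_Cons shuffle_ew_Nil_right)
  then show ?thesis by (metis tpair_shuffle_words)
qed

section \<open>Concatenation powers and the logarithm\<close>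

lemma tmul_assoc: "tmul (tmul a b) c = tmul a (tmul b c)" for a b c :: "'d list \<Rightarrow> real"
proof
  fix w :: "'d list"
  define n where "n = length w"
  let ?G = "\<lambda>i j. a (take i w) * b (take j (drop i w)) * c (drop (i + j) w)"
  have "tmul (tmul a b) c w = (\<Sum>k\<le>n. \<Sum>i\<le>k. ?G i (k - i))"
    unfolding tmul_def n_def
    by (intro sum.cong refl) (auto simp: sum_distrib_right min_def take_drop)
  also have "\<dots> = (\<Sum>(i, j)\<in>{(i, j). i + j \<le> n}. ?G i j)"
    by (rule sum.triangle_reindex_eq[symmetric])
  also have "\<dots> = (\<Sum>i\<le>n. \<Sum>j\<le>n - i. ?G i j)"
    by (simp add: sum.Sigma) (rule sum.cong; auto)
  also have "\<dots> = tmul a (tmul b c) w"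
    unfolding tmul_def n_def by (intro sum.cong refl) (auto simp: sum_distrib_left mult_ac add.commute)
  finally show "tmul (tmul a b) c w = tmul a (tmul b c) w" .
qed

lemma tmul_tone_left: "tmul tone y = y" for y :: "'d list \<Rightarrow> real"
proof
  fix w :: "'d list"
  have "tmul tone y w = (\<Sum>i\<le>length w. if i = 0 then y w else 0)"
    unfolding tmul_def tone_def ew_def by (intro sum.cong refl) auto
  then show "tmul tone y w = y w" by simp
qed

lemma tmul_tone_right: "tmul y tone = y" for y :: "'d list \<Rightarrow> real"
proof
  fix w :: "'d list"
  have "tmul y tone w = (\<Sum>i\<le>length w. if i = length w then y w else 0)"
    unfolding tmul_def tone_def ew_def by (intro sum.cong refl) auto
  then show "tmul y tone w = y w" by simp
qed

lemma tpow_Suc_right: "tpow y (Suc n) = tmul (tpow y n) y"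
proof (induction n)
  case 0 then show ?case by (simp add: tmul_tone_left tmul_tone_right)
next
  case (Suc n)
  have "tpow y (Suc (Suc n)) = tmul y (tmul (tpow y n) y)" using Suc by simp
  also have "\<dots> = tmul (tpow y (Suc n)) y" by (simp add: tmul_assoc)
  finally show ?case .
qed

declare tpow.simps(2)[simp del]

lemma tpow_add: "tpow y (m + n) = tmul (tpow y m) (tpow y n)" for y :: "'d list \<Rightarrow> real"
  by (induction m) (simp_all add: tmul_tone_left tmul_assoc tpow.simps(2))

lemma tpow_vanish:
  fixes y :: "'d list \<Rightarrow> real"
  assumes y0: "y [] = 0"
  shows "length w < m \<Longrightarrow> tpow y m w = 0"
proof (induction m arbitrary: w)
  case 0 then show ?case by simp
next
  case (Suc m)
  have "tpow y (Suc m) w = (\<Sum>i\<le>length w. y (take i w) * tpow y m (drop i w))"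
    by (simp add: tmul_def tpow.simps(2))
  also have "\<dots> = 0"
  proof (intro sum.neutral ballI)
    fix i assume "i \<in> {..length w}"
    show "y (take i w) * tpow y m (drop i w) = 0"
    proof (cases "i = 0")
      case True then show ?thesis using y0 by simp
    next
      case False
      then have "length (drop i w) < m" using Suc.prems \<open>i \<in> {..length w}\<close> by auto
      then show ?thesis using Suc.IH by simp
    qed
  qed
  finally show ?case .
qed

definition tsub_one :: "('d list \<Rightarrow> real) \<Rightarrow> 'd list \<Rightarrow> real" where
  "tsub_one \<mu> = (\<lambda>w. \<mu> w - tone w)"

lemma tsub_one_Nil: "\<mu> [] = 1 \<Longrightarrow> tsub_one \<mu> [] = 0"
  by (simp add: tsub_one_def tone_def ew_def)

lemma pair_shuffles_tsub_one:
  "pair_shuffles (tsub_one \<mu>) ws = pair_shuffles \<mu> ws - pair_shuffles tone ws"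
  by (simp add: tsub_one_def pair_shuffles_diff)

lemma tlog_eq_finite_sum:
  fixes \<mu> :: "'d list \<Rightarrow> real"
  assumes m0: "\<mu> [] = 1" and w: "length w \<le> L"
  shows "tlog \<mu> w = (\<Sum>n<L. (-1) ^ n / real (Suc n) * tpow (tsub_one \<mu>) (Suc n) w)"
proof -
  have "tlog \<mu> w = (\<Sum>n. (-1) ^ n / real (Suc n) * tpow (tsub_one \<mu>) (Suc n) w)"
    by (simp add: tlog_def tsub_one_def)
  also have "\<dots> = (\<Sum>n<L. (-1) ^ n / real (Suc n) * tpow (tsub_one \<mu>) (Suc n) w)"
  proof (rule suminf_finite)
    fix n assume "n \<notin> {..<L}"
    then have "length w < Suc n" using w by auto
    then show "(-1) ^ n / real (Suc n) * tpow (tsub_one \<mu>) (Suc n) w = 0"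
      using tpow_vanish[of "tsub_one \<mu>", OF tsub_one_Nil[of \<mu>, OF m0]] by simp
  qed simp
  finally show ?thesis .
qed

lemma tlog_Nil: "\<mu> [] = 1 \<Longrightarrow> tlog \<mu> [] = (0::real)"
  for \<mu> :: "'d list \<Rightarrow> real"
  using tlog_eq_finite_sum[of \<mu> "[]" 0] by simp

section \<open>Ordered partitions of a finite poset\<close>

definition kernel_maps :: "'a set \<Rightarrow> ('a \<Rightarrow> 'a \<Rightarrow> bool) \<Rightarrow> 'a set set \<Rightarrow> ('a \<Rightarrow> nat) set" where
  "kernel_maps P le a = {f \<in> P \<rightarrow>\<^sub>E {1..card a}. order_pres P le f \<and> kernel P f = a}"

lemma opfact_eq_card_kernel_maps: "opfact P le a = card (kernel_maps P le a)"
  by (simp add: opfact_def kernel_maps_def)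

lemma finite_kernel_maps: "finite P \<Longrightarrow> finite (kernel_maps P le a)"
  unfolding kernel_maps_def by (rule finite_subset[OF _ finite_PiE[of P "\<lambda>_. {1..card a}"]]) auto

lemma finite_Orp: "finite P \<Longrightarrow> finite (Orp P le)"
  by (rule finite_subset[of _ "Pow (Pow P)"]) (auto simp: Orp_def kernel_def)

lemma kernel_eq_image_fibres: "kernel P f = (\<lambda>x. {y \<in> P. f y = f x}) ` P"
  by (auto simp: kernel_def)

lemma card_kernel:
  assumes "finite P"
  shows "card (kernel P f) = card (f ` P)"
  unfolding kernel_def
proof (rule card_image)
  show "inj_on (\<lambda>n. {x \<in> P. f x = n}) (f ` P)"
  proof (rule inj_onI)
    fix x y assume "x \<in> f ` P" "y \<in> f ` P" and e: "{z \<in> P. f z = x} = {z \<in> P. f z = y}"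
    then obtain u where "u \<in> P" "f u = x" by auto
    then have "u \<in> {z \<in> P. f z = y}" using e by auto
    then show "x = y" using \<open>f u = x\<close> by simp
  qed
qed

lemma kernel_maps_image:
  assumes "finite P" "f \<in> kernel_maps P le a"
  shows "f ` P = {1..card a}"
proof -
  have "f ` P \<subseteq> {1..card a}" "card (f ` P) = card a"
    using assms card_kernel[OF assms(1), of f] by (auto simp: kernel_maps_def)
  then show ?thesis by (intro card_subset_eq) auto
qed

lemma fibre_eq_of_kernel_eq:
  assumes k: "kernel P f1 = kernel P f2" and x: "x \<in> P" and y: "y \<in> P"
  shows "f1 y = f1 x \<longleftrightarrow> f2 y = f2 x"
proof -
  have "{z \<in> P. f1 z = f1 x} \<in> kernel P f2" using k x by (auto simp: kernel_eq_image_fibres)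
  then obtain x' where x': "x' \<in> P" "{z \<in> P. f1 z = f1 x} = {z \<in> P. f2 z = f2 x'}" by (auto simp: kernel_eq_image_fibres)
  have "x \<in> {z \<in> P. f2 z = f2 x'}" using x'(2) x by blast
  then have "f2 x = f2 x'" by simp
  then have "{z \<in> P. f1 z = f1 x} = {z \<in> P. f2 z = f2 x}" using x' by simp
  then show ?thesis using y by blast
qed

lemma card_image_fibres:
  assumes "finite P" "Y \<subseteq> P"
  shows "card (f ` Y) = card ((\<lambda>y. {z \<in> P. f z = f y}) ` Y)"
proof -
  have "(\<lambda>y. {z \<in> P. f z = f y}) ` Y = (\<lambda>v. {z \<in> P. f z = v}) ` (f ` Y)" by auto
  moreover have "inj_on (\<lambda>v. {z \<in> P. f z = v}) (f ` Y)"
  proof (rule inj_onI)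
    fix u v assume "u \<in> f ` Y" "v \<in> f ` Y" and e: "{z \<in> P. f z = u} = {z \<in> P. f z = v}"
    then obtain y where "y \<in> Y" "f y = u" by auto
    then have "y \<in> {z \<in> P. f z = u}" using assms by auto
    then show "u = v" using e \<open>f y = u\<close> by auto
  qed
  ultimately show ?thesis by (simp add: card_image)
qed

text \<open>Composing an order-preserving map with the rank function of its image compresses its
  values to \<open>{1..card a}\<close> without changing its kernel; so every ordered partition is the kernel
  of some order-preserving surjection.\<close>

lemma rank_in_kernel_maps:
  assumes fin: "finite P" and g: "order_pres P le g"
  shows "restrict (\<lambda>x. card {v \<in> g ` P. v \<le> g x}) P \<in> kernel_maps P le (kernel P g)"
proof -
  define V where "V = g ` P"
  define r where "r u = card {v \<in> V. v \<le> u}" for u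
  have finV: "finite V" using fin by (simp add: V_def)
  have r_mono: "u \<le> w \<Longrightarrow> r u \<le> r w" for u w
    unfolding r_def by (rule card_mono) (auto simp: finV)
  have r_strict: "r u < r w" if "u \<in> V" "w \<in> V" "u < w" for u w
  proof -
    have "{v \<in> V. v \<le> u} \<subseteq> {v \<in> V. v \<le> w}" "w \<in> {v \<in> V. v \<le> w} - {v \<in> V. v \<le> u}"
      using that by auto
    then have "{v \<in> V. v \<le> u} \<subset> {v \<in> V. v \<le> w}" by blast
    then show ?thesis unfolding r_def by (intro psubset_card_mono) (simp_all add: finV)
  qed
  have r_inj: "u \<in> V \<Longrightarrow> w \<in> V \<Longrightarrow> r u = r w \<Longrightarrow> u = w" for u w
    using r_strict by (metis linorder_neqE_nat less_irrefl_nat)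
  have r_range: "r u \<in> {1..card V}" if "u \<in> V" for u
  proof -
    have "r u \<le> card V" unfolding r_def by (rule card_mono) (auto simp: finV)
    moreover have "r u \<noteq> 0" using that finV unfolding r_def by (auto simp: card_eq_0_iff)
    ultimately show ?thesis by simp
  qed
  have cardV: "card V = card (kernel P g)" using card_kernel[OF fin, of g] by (simp add: V_def)
  have "kernel P (restrict (\<lambda>x. r (g x)) P) = kernel P g"
    unfolding kernel_eq_image_fibres by (rule image_cong[OF refl]) (use r_inj in \<open>auto simp: V_def\<close>)
  moreover have "order_pres P le (restrict (\<lambda>x. r (g x)) P)"
    using g r_mono by (auto simp: order_pres_def)
  moreover have "restrict (\<lambda>x. r (g x)) P \<in> P \<rightarrow>\<^sub>E {1..card (kernel P g)}"
    using r_range cardV by (auto simp: V_def)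
  ultimately show ?thesis by (simp add: kernel_maps_def r_def V_def)
qed

lemma kernel_maps_nonempty: "finite P \<Longrightarrow> a \<in> Orp P le \<Longrightarrow> kernel_maps P le a \<noteq> {}"
  using rank_in_kernel_maps by (fastforce simp: Orp_def)

lemma chain_kernel_le_mono:
  assumes tot: "\<And>x y. x \<in> P \<Longrightarrow> y \<in> P \<Longrightarrow> le x y \<or> le y x"
    and o1: "order_pres P le f1" and o2: "order_pres P le f2" and k: "kernel P f1 = kernel P f2"
    and x: "x \<in> P" and y: "y \<in> P" and le1: "f1 y \<le> f1 x"
  shows "f2 y \<le> f2 x"
proof (cases "f1 y = f1 x")
  case True
  then show ?thesis using fibre_eq_of_kernel_eq[OF k x y] by simp
next
  case False
  then have "f1 y < f1 x" using le1 by simp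
  then have "\<not> le x y" using o1 x y unfolding order_pres_def by (meson not_le)
  then have "le y x" using tot x y by blast
  then show ?thesis using o2 x y unfolding order_pres_def by blast
qed

lemma surj_value_eq_card:
  assumes "f ` P = {1..m}" "x \<in> P"
  shows "f x = card (f ` {y \<in> P. f y \<le> f x})"
proof -
  have "f ` {y \<in> P. f y \<le> f x} = {1..f x}"
  proof
    show "f ` {y \<in> P. f y \<le> f x} \<subseteq> {1..f x}" using assms(1) by force
    show "{1..f x} \<subseteq> f ` {y \<in> P. f y \<le> f x}"
    proof
      fix v assume v: "v \<in> {1..f x}"
      moreover have "f x \<in> {1..m}" using assms by blast
      ultimately have "v \<in> f ` P" using assms(1) by auto
      then show "v \<in> f ` {y \<in> P. f y \<le> f x}" using v by auto
    qed
  qed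
  then show ?thesis by simp
qed

text \<open>On a chain an order-preserving surjection onto \<open>{1..m}\<close> is determined by its kernel:
  its value at \<open>x\<close> counts the blocks lying weakly below the block of \<open>x\<close>.\<close>

lemma chain_kernel_maps_unique:
  assumes fin: "finite P" and tot: "\<And>x y. x \<in> P \<Longrightarrow> y \<in> P \<Longrightarrow> le x y \<or> le y x"
    and f1: "f1 \<in> kernel_maps P le a" and f2: "f2 \<in> kernel_maps P le a"
  shows "f1 = f2"
proof
  fix x
  show "f1 x = f2 x"
  proof (cases "x \<in> P")
    case False
    then show ?thesis using f1 f2 by (auto simp: kernel_maps_def PiE_def extensional_def)
  next
    case x: True
    have o1: "order_pres P le f1" and o2: "order_pres P le f2" and k: "kernel P f1 = kernel P f2"
      using f1 f2 by (simp_all add: kernel_maps_def)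
    have Y: "{y \<in> P. f1 y \<le> f1 x} = {y \<in> P. f2 y \<le> f2 x}"
      using chain_kernel_le_mono[OF tot o1 o2 k x] chain_kernel_le_mono[OF tot o2 o1 k[symmetric] x] by blast
    have "f1 x = card (f1 ` {y \<in> P. f1 y \<le> f1 x})"
      by (rule surj_value_eq_card[OF kernel_maps_image[OF fin f1] x])
    also have "\<dots> = card ((\<lambda>y. {z \<in> P. f1 z = f1 y}) ` {y \<in> P. f1 y \<le> f1 x})"
      by (rule card_image_fibres[OF fin]) auto
    also have "(\<lambda>y. {z \<in> P. f1 z = f1 y}) ` {y \<in> P. f1 y \<le> f1 x}
        = (\<lambda>y. {z \<in> P. f2 z = f2 y}) ` {y \<in> P. f2 y \<le> f2 x}"
      unfolding Y by (rule image_cong[OF refl]) (use fibre_eq_of_kernel_eq[OF k] in blast)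
    also have "card \<dots> = card (f2 ` {y \<in> P. f2 y \<le> f2 x})"
      by (rule card_image_fibres[OF fin, symmetric]) auto
    also have "\<dots> = f2 x"
      by (rule surj_value_eq_card[OF kernel_maps_image[OF fin f2] x, symmetric])
    finally show ?thesis .
  qed
qed

lemma opfact_chain_eq_1:
  assumes "finite P" and "\<And>x y. x \<in> P \<Longrightarrow> y \<in> P \<Longrightarrow> le x y \<or> le y x" and "a \<in> Orp P le"
  shows "opfact P le a = 1"
proof -
  obtain f where "f \<in> kernel_maps P le a" using kernel_maps_nonempty[OF assms(1,3)] by blast
  with chain_kernel_maps_unique[of P le, OF assms(1,2)] have "kernel_maps P le a = {f}" by blast
  then show ?thesis by (simp add: opfact_eq_card_kernel_maps)
qed


definition opsurjs :: "'a set \<Rightarrow> ('a \<Rightarrow> 'a \<Rightarrow> bool) \<Rightarrow> nat \<Rightarrow> ('a \<Rightarrow> nat) set" where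
  "opsurjs P le m = {f \<in> P \<rightarrow>\<^sub>E {1..m}. order_pres P le f \<and> f ` P = {1..m}}"

lemma finite_opsurjs: "finite P \<Longrightarrow> finite (opsurjs P le m)"
  unfolding opsurjs_def by (rule finite_subset[OF _ finite_PiE[of P "\<lambda>_. {1..m}"]]) auto

lemma card_kernel_opsurjs: "finite P \<Longrightarrow> f \<in> opsurjs P le m \<Longrightarrow> card (kernel P f) = m"
  using card_kernel[of P f] by (simp add: opsurjs_def)

lemma kernel_maps_eq_opsurjs:
  "finite P \<Longrightarrow> kernel_maps P le a = {f \<in> opsurjs P le (card a). kernel P f = a}"
  using kernel_maps_image[of P _ le a] by (auto simp: kernel_maps_def opsurjs_def)

lemma bij_betw_kernel_opsurjs:
  assumes fin: "finite P" and ne: "P \<noteq> {}"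
  shows "bij_betw (\<lambda>(m, f). (kernel P f, f))
           (Sigma {1..card P} (opsurjs P le)) (Sigma (Orp P le) (kernel_maps P le))"
proof (rule bij_betw_byWitness[where f' = "\<lambda>(a, f). (card a, f)"])
  show "\<forall>x\<in>Sigma {1..card P} (opsurjs P le). (\<lambda>(a, f). (card a, f)) ((\<lambda>(m, f). (kernel P f, f)) x) = x"
    using card_kernel_opsurjs[OF fin] by auto
  show "\<forall>y\<in>Sigma (Orp P le) (kernel_maps P le). (\<lambda>(m, f). (kernel P f, f)) ((\<lambda>(a, f). (card a, f)) y) = y"
    by (auto simp: kernel_maps_def)
  have "kernel P f \<in> Orp P le \<and> f \<in> kernel_maps P le (kernel P f)" if "f \<in> opsurjs P le m" for m f
    using that card_kernel_opsurjs[OF fin that] by (auto simp: Orp_def opsurjs_def kernel_maps_def)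
  then show "(\<lambda>(m, f). (kernel P f, f)) ` Sigma {1..card P} (opsurjs P le) \<subseteq> Sigma (Orp P le) (kernel_maps P le)"
    by auto
  have "1 \<le> card a \<and> card a \<le> card P" if "f \<in> kernel_maps P le a" for a f
  proof -
    have "card a = card (f ` P)" using kernel_maps_image[OF fin that] by simp
    moreover have "card (f ` P) \<le> card P" "card (f ` P) \<noteq> 0"
      using fin ne by (auto simp: card_image_le)
    ultimately show ?thesis by simp
  qed
  then show "(\<lambda>(a, f). (card a, f)) ` Sigma (Orp P le) (kernel_maps P le) \<subseteq> Sigma {1..card P} (opsurjs P le)"
    by (auto simp: kernel_maps_eq_opsurjs[OF fin])
qed

lemma sum_opsurjs_by_kernel:
  fixes G :: "'a set set \<Rightarrow> real" and c :: "nat \<Rightarrow> real"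
  assumes fin: "finite P" and ne: "P \<noteq> {}"
  shows "(\<Sum>m\<in>{1..card P}. c m * (\<Sum>f\<in>opsurjs P le m. G (kernel P f)))
       = (\<Sum>a\<in>Orp P le. c (card a) * real (opfact P le a) * G a)"
proof -
  have "(\<Sum>m\<in>{1..card P}. c m * (\<Sum>f\<in>opsurjs P le m. G (kernel P f)))
      = (\<Sum>(m, f)\<in>Sigma {1..card P} (opsurjs P le). c m * G (kernel P f))"
    by (simp add: sum.Sigma sum_distrib_left finite_opsurjs[OF fin])
  also have "\<dots> = (\<Sum>(m, f)\<in>Sigma {1..card P} (opsurjs P le). c (card (kernel P f)) * G (kernel P f))"
    by (rule sum.cong[OF refl]) (auto simp: card_kernel_opsurjs[OF fin])
  also have "\<dots> = (\<Sum>(a, f)\<in>Sigma (Orp P le) (kernel_maps P le). c (card a) * G a)"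
    using sum.reindex_bij_betw[OF bij_betw_kernel_opsurjs[OF fin ne], of "\<lambda>(a, f). c (card a) * G a"]
    by (simp add: case_prod_unfold)
  also have "\<dots> = (\<Sum>a\<in>Orp P le. c (card a) * real (opfact P le a) * G a)"
    by (simp add: sum.Sigma[symmetric] finite_Orp[OF fin] finite_kernel_maps[OF fin]
        opfact_eq_card_kernel_maps mult_ac)
  finally show ?thesis .
qed

section \<open>Order-preserving maps on the word poset\<close>

lemma wposet_eq: "wposet ws = Sigma {..<length ws} (\<lambda>j. {..<length (ws ! j)})"
  by (auto simp: wposet_def)

lemma finite_wposet[simp]: "finite (wposet ws)"
  by (simp add: wposet_eq)

definition opmaps :: "'d list list \<Rightarrow> nat \<Rightarrow> (nat \<times> nat \<Rightarrow> nat) set" where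
  "opmaps ws n = {f \<in> wposet ws \<rightarrow>\<^sub>E {1..n}. order_pres (wposet ws) wle f}"

lemma finite_opmaps[simp]: "finite (opmaps ws n)"
  unfolding opmaps_def by (rule finite_subset[OF _ finite_PiE[of "wposet ws" "\<lambda>_. {1..n}"]]) auto

definition fibre :: "'d list list \<Rightarrow> (nat \<times> nat \<Rightarrow> nat) \<Rightarrow> nat \<Rightarrow> (nat \<times> nat) set" where
  "fibre ws f i = {x \<in> wposet ws. f x = i}"

definition fibre_words :: "'d list list \<Rightarrow> (nat \<times> nat \<Rightarrow> nat) \<Rightarrow> nat \<Rightarrow> 'd list list" where
  "fibre_words ws f i = map (blockword ws (fibre ws f i)) [0..<length ws]"

lemma map_nth_upt_drop: "map (\<lambda>p. w ! p) [a..<length w] = drop a w"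
  by (rule nth_equalityI) auto

lemma downclosed_eq_lessThan:
  fixes S :: "nat set"
  assumes "S \<subseteq> {..<m}" "\<And>p q. q \<in> S \<Longrightarrow> p \<le> q \<Longrightarrow> p \<in> S"
  shows "S = {..<card S}"
proof (cases "S = {}")
  case True then show ?thesis by simp
next
  case False
  have fin: "finite S" using assms(1) finite_subset by blast
  have "S = {..Max S}"
    using False fin by (auto intro: Max_ge assms(2)[OF Max_in[OF fin False]])
  then show ?thesis by (metis card_atMost lessThan_Suc_atMost)
qed

lemma takes_length[simp]: "length (takes c ws) = min (length c) (length ws)"
  by (simp add: takes_def)

lemma drops_length[simp]: "length (drops c ws) = min (length c) (length ws)"
  by (simp add: drops_def)

lemma takes_nth: "j < length c \<Longrightarrow> j < length ws \<Longrightarrow> takes c ws ! j = take (c ! j) (ws ! j)"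
  by (simp add: takes_def)

lemma drops_nth: "j < length c \<Longrightarrow> j < length ws \<Longrightarrow> drops c ws ! j = drop (c ! j) (ws ! j)"
  by (simp add: drops_def)

lemma length_takes_nth: "c \<in> splits ws \<Longrightarrow> j < length ws \<Longrightarrow> length (takes c ws ! j) = c ! j"
  by (auto simp: splits_def takes_nth min_def)

lemma mem_wposet_takes:
  assumes "c \<in> splits ws"
  shows "x \<in> wposet (takes c ws) \<longleftrightarrow> fst x < length ws \<and> snd x < c ! fst x"
  using assms length_takes_nth[OF assms] by (cases x) (auto simp: wposet_def splits_def)

lemma wposet_takes_sub:
  assumes "c \<in> splits ws" "x \<in> wposet (takes c ws)"
  shows "x \<in> wposet ws"
  using assms mem_wposet_takes[OF assms(1), of x] by (cases x) (fastforce simp: wposet_def splits_def)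

lemma opmaps_range: "f \<in> opmaps ws m \<Longrightarrow> x \<in> wposet ws \<Longrightarrow> f x \<in> {1..m}"
  unfolding opmaps_def by auto

text \<open>An order-preserving map into \<open>{1..n+1}\<close> is the same as a cut \<open>c\<close> of the words
  (the positions taking values \<open>\<le> n\<close> form prefixes) together with an order-preserving map
  into \<open>{1..n}\<close> on these prefixes; \<open>extend_top\<close> and \<open>level_cut\<close> are the two directions.\<close>

definition extend_top :: "'d list list \<Rightarrow> nat list \<Rightarrow> nat \<Rightarrow> (nat \<times> nat \<Rightarrow> nat) \<Rightarrow> nat \<times> nat \<Rightarrow> nat" where
  "extend_top ws c n g =
     (\<lambda>x. if x \<in> wposet ws then (if snd x < c ! fst x then g x else Suc n) else undefined)"

definition level_cut :: "'d list list \<Rightarrow> nat \<Rightarrow> (nat \<times> nat \<Rightarrow> nat) \<Rightarrow> nat list" where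
  "level_cut ws n f = map (\<lambda>j. card {p. p < length (ws ! j) \<and> f (j, p) \<le> n}) [0..<length ws]"

lemma level_cut_downset:
  assumes f: "f \<in> opmaps ws m" and j: "j < length ws"
  shows "{p. p < length (ws ! j) \<and> f (j, p) \<le> n} = {..<level_cut ws n f ! j}"
proof -
  let ?S = "{p. p < length (ws ! j) \<and> f (j, p) \<le> n}"
  have "?S = {..<card ?S}"
  proof (rule downclosed_eq_lessThan[of _ "length (ws ! j)"])
    fix p q assume "q \<in> ?S" "p \<le> q"
    moreover have "f (j, p) \<le> f (j, q)" if "p \<le> q" "q < length (ws ! j)"
      using f that j unfolding opmaps_def order_pres_def wle_def wposet_def by auto
    ultimately show "p \<in> ?S" by auto
  qed auto
  then show ?thesis using j by (simp add: level_cut_def)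
qed

lemma level_cut_splits: "level_cut ws n f \<in> splits ws"
proof -
  have "card {p. p < length (ws ! j) \<and> f (j, p) \<le> n} \<le> length (ws ! j)" for j
    using card_mono[of "{..<length (ws ! j)}" "{p. p < length (ws ! j) \<and> f (j, p) \<le> n}"] by auto
  then show ?thesis by (simp add: splits_def level_cut_def)
qed

lemma blockword_cong:
  assumes "\<And>p. (j, p) \<in> B \<Longrightarrow> ws ! j ! p = ws' ! j ! p" "{p. (j, p) \<in> B} = {p. (j, p) \<in> B'}"
    and finB: "finite B"
  shows "blockword ws B j = blockword ws' B' j"
proof -
  have fin: "finite {p. (j, p) \<in> B}"
    by (rule finite_subset[of _ "snd ` B"]) (use finB in force)+
  show ?thesis unfolding blockword_def assms(2)[symmetric]
    by (rule map_cong) (auto simp: fin assms(1))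
qed

lemma extend_top_opmaps:
  assumes c: "c \<in> splits ws" and g: "g \<in> opmaps (takes c ws) n"
  shows "extend_top ws c n g \<in> opmaps ws (Suc n)"
proof -
  have low: "x \<in> wposet (takes c ws)" if "x \<in> wposet ws" "snd x < c ! fst x" for x
    unfolding mem_wposet_takes[OF c] using that by (auto simp: wposet_def)
  have range: "extend_top ws c n g x \<in> {1..Suc n}" if "x \<in> wposet ws" for x
    using that low[OF that] opmaps_range[OF g, of x] unfolding extend_top_def by auto
  have mono: "extend_top ws c n g x \<le> extend_top ws c n g y"
    if xy: "x \<in> wposet ws" "y \<in> wposet ws" "wle x y" for x y
  proof (cases "snd y < c ! fst y")
    case True
    then have "snd x < c ! fst x" using xy(3) by (auto simp: wle_def)
    with True xy low show ?thesis
      using g by (auto simp: extend_top_def opmaps_def order_pres_def)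
  next
    case False
    then show ?thesis using xy range[OF xy(1)] by (auto simp: extend_top_def)
  qed
  have "extend_top ws c n g \<in> extensional (wposet ws)"
    by (simp add: extensional_def extend_top_def)
  with range mono show ?thesis
    by (simp add: opmaps_def order_pres_def PiE_iff)
qed

lemma level_cut_extend_top:
  assumes c: "c \<in> splits ws" and g: "g \<in> opmaps (takes c ws) n"
  shows "level_cut ws n (extend_top ws c n g) = c"
proof (rule nth_equalityI)
  show "length (level_cut ws n (extend_top ws c n g)) = length c" using c by (simp add: level_cut_def splits_def)
  fix j assume "j < length (level_cut ws n (extend_top ws c n g))"
  then have j: "j < length ws" by (simp add: level_cut_def)
  have cj: "c ! j \<le> length (ws ! j)" using c j by (simp add: splits_def)
  have "{p. p < length (ws ! j) \<and> extend_top ws c n g (j, p) \<le> n} = {..<c ! j}"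
  proof (intro set_eqI iffI)
    fix p assume p: "p \<in> {p. p < length (ws ! j) \<and> extend_top ws c n g (j, p) \<le> n}"
    then have "(j, p) \<in> wposet ws" using j by (simp add: wposet_def)
    with p show "p \<in> {..<c ! j}" by (auto simp: extend_top_def split: if_splits)
  next
    fix p assume p: "p \<in> {..<c ! j}"
    then have "(j, p) \<in> wposet (takes c ws)" using c j by (simp add: mem_wposet_takes)
    moreover have "(j, p) \<in> wposet ws" using p cj j by (simp add: wposet_def)
    ultimately show "p \<in> {p. p < length (ws ! j) \<and> extend_top ws c n g (j, p) \<le> n}"
      using opmaps_range[OF g] p cj by (auto simp: extend_top_def)
  qed
  then show "level_cut ws n (extend_top ws c n g) ! j = c ! j" using j by (simp add: level_cut_def)
qed

lemma restrict_extend_top: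
  assumes c: "c \<in> splits ws" and g: "g \<in> opmaps (takes c ws) n"
  shows "restrict (extend_top ws c n g) (wposet (takes c ws)) = g"
proof
  fix x show "restrict (extend_top ws c n g) (wposet (takes c ws)) x = g x"
  proof (cases "x \<in> wposet (takes c ws)")
    case True
    then show ?thesis using wposet_takes_sub[OF c True] c by (simp add: extend_top_def mem_wposet_takes)
  next
    case False
    then show ?thesis using g unfolding opmaps_def by (cases x) (auto simp: PiE_def extensional_def)
  qed
qed

lemma restrict_level_cut_opmaps:
  assumes f: "f \<in> opmaps ws (Suc n)"
  shows "restrict f (wposet (takes (level_cut ws n f) ws)) \<in> opmaps (takes (level_cut ws n f) ws) n"
proof -
  let ?c = "level_cut ws n f"
  have c: "?c \<in> splits ws" using level_cut_splits .
  have val: "f x \<in> {1..n}" if x: "x \<in> wposet (takes ?c ws)" for x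
  proof -
    obtain j p where xjp: "x = (j, p)" by (cases x)
    have j: "j < length ws" and p: "p < ?c ! j" using x c xjp by (auto simp: mem_wposet_takes)
    have "p \<in> {p. p < length (ws ! j) \<and> f (j, p) \<le> n}" using level_cut_downset[OF f j, of n] p by simp
    moreover have "f x \<ge> 1" using opmaps_range[OF f wposet_takes_sub[OF c x]] by simp
    ultimately show ?thesis using xjp by simp
  qed
  show ?thesis unfolding opmaps_def
  proof (intro CollectI conjI)
    show "restrict f (wposet (takes ?c ws)) \<in> wposet (takes ?c ws) \<rightarrow>\<^sub>E {1..n}"
      using val by auto
    show "order_pres (wposet (takes ?c ws)) wle (restrict f (wposet (takes ?c ws)))"
      using f wposet_takes_sub[OF c] unfolding opmaps_def order_pres_def by auto
  qed
qed

lemma extend_top_restrict: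
  assumes f: "f \<in> opmaps ws (Suc n)"
  shows "extend_top ws (level_cut ws n f) n (restrict f (wposet (takes (level_cut ws n f) ws))) = f"
proof
  fix x
  let ?c = "level_cut ws n f"
  have c: "?c \<in> splits ws" using level_cut_splits .
  show "extend_top ws ?c n (restrict f (wposet (takes ?c ws))) x = f x"
  proof (cases "x \<in> wposet ws")
    case False
    then show ?thesis using f unfolding opmaps_def by (cases x) (auto simp: extend_top_def PiE_def extensional_def)
  next
    case True
    obtain j p where xjp: "x = (j, p)" by (cases x)
    have j: "j < length ws" and pl: "p < length (ws ! j)" using True xjp by (auto simp: wposet_def)
    show ?thesis
    proof (cases "p < ?c ! j")
      case True
      then show ?thesis using j xjp \<open>x \<in> wposet ws\<close> c by (simp add: extend_top_def mem_wposet_takes)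
    next
      case False
      then have "p \<notin> {p. p < length (ws ! j) \<and> f (j, p) \<le> n}" using level_cut_downset[OF f j, of n] by simp
      then have "f x > n" using pl xjp by auto
      moreover have "f x \<le> Suc n" using opmaps_range[OF f \<open>x \<in> wposet ws\<close>] by simp
      ultimately show ?thesis using False xjp \<open>x \<in> wposet ws\<close> by (simp add: extend_top_def)
    qed
  qed
qed

lemma fibre_words_extend_top_low:
  assumes c: "c \<in> splits ws" and g: "g \<in> opmaps (takes c ws) n" and i: "i \<in> {1..n}"
  shows "fibre_words ws (extend_top ws c n g) i = fibre_words (takes c ws) g i"
proof -
  have fibeq: "fibre ws (extend_top ws c n g) i = fibre (takes c ws) g i"
  proof (intro set_eqI iffI)
    fix x assume "x \<in> fibre ws (extend_top ws c n g) i"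
    then have x: "x \<in> wposet ws" and e: "extend_top ws c n g x = i" by (auto simp: fibre_def)
    then have "snd x < c ! fst x" using i by (auto simp: extend_top_def split: if_splits)
    then have "x \<in> wposet (takes c ws)" using x unfolding mem_wposet_takes[OF c] by (auto simp: wposet_def)
    then show "x \<in> fibre (takes c ws) g i" using e x \<open>snd x < c ! fst x\<close> by (simp add: fibre_def extend_top_def)
  next
    fix x assume "x \<in> fibre (takes c ws) g i"
    then have x: "x \<in> wposet (takes c ws)" and e: "g x = i" by (auto simp: fibre_def)
    then show "x \<in> fibre ws (extend_top ws c n g) i"
      using wposet_takes_sub[OF c x] c by (simp add: fibre_def extend_top_def mem_wposet_takes)
  qed
  have len: "length c = length ws" using c by (simp add: splits_def)
  show ?thesis unfolding fibre_words_def fibeq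
  proof (rule nth_equalityI)
    show "length (map (blockword ws (fibre (takes c ws) g i)) [0..<length ws]) =
      length (map (blockword (takes c ws) (fibre (takes c ws) g i)) [0..<length (takes c ws)])" using len by simp
    fix j assume "j < length (map (blockword ws (fibre (takes c ws) g i)) [0..<length ws])"
    then have j: "j < length ws" by simp
    have "blockword ws (fibre (takes c ws) g i) j = blockword (takes c ws) (fibre (takes c ws) g i) j"
    proof (rule blockword_cong)
      fix p assume "(j, p) \<in> fibre (takes c ws) g i"
      then have "p < c ! j" using c by (simp add: fibre_def mem_wposet_takes)
      then show "ws ! j ! p = takes c ws ! j ! p" using j len by (simp add: takes_nth)
    qed (simp_all add: fibre_def)
    then show "map (blockword ws (fibre (takes c ws) g i)) [0..<length ws] ! j =
      map (blockword (takes c ws) (fibre (takes c ws) g i)) [0..<length (takes c ws)] ! j" using j len by simp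
  qed
qed

lemma fibre_words_extend_top_top:
  assumes c: "c \<in> splits ws" and g: "g \<in> opmaps (takes c ws) n"
  shows "fibre_words ws (extend_top ws c n g) (Suc n) = drops c ws"
proof -
  have len: "length c = length ws" using c by (simp add: splits_def)
  show ?thesis unfolding fibre_words_def
  proof (rule nth_equalityI)
    show "length (map (blockword ws (fibre ws (extend_top ws c n g) (Suc n))) [0..<length ws]) = length (drops c ws)"
      using len by simp
    fix j assume "j < length (map (blockword ws (fibre ws (extend_top ws c n g) (Suc n))) [0..<length ws])"
    then have j: "j < length ws" by simp
    have cj: "c ! j \<le> length (ws ! j)" using c j by (simp add: splits_def)
    have "{p. (j, p) \<in> fibre ws (extend_top ws c n g) (Suc n)} = {c ! j..<length (ws ! j)}"
    proof (intro set_eqI iffI)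
      fix p assume "p \<in> {p. (j, p) \<in> fibre ws (extend_top ws c n g) (Suc n)}"
      then have x: "(j, p) \<in> wposet ws" and e: "extend_top ws c n g (j, p) = Suc n" by (auto simp: fibre_def)
      have "\<not> p < c ! j"
      proof
        assume "p < c ! j"
        then have "(j, p) \<in> wposet (takes c ws)" using c j by (simp add: mem_wposet_takes)
        then have "g (j, p) \<le> n" using opmaps_range[OF g] by fastforce
        with e x \<open>p < c ! j\<close> show False by (simp add: extend_top_def)
      qed
      then show "p \<in> {c ! j..<length (ws ! j)}" using x by (simp add: wposet_def)
    next
      fix p assume "p \<in> {c ! j..<length (ws ! j)}"
      then show "p \<in> {p. (j, p) \<in> fibre ws (extend_top ws c n g) (Suc n)}"
        using j by (simp add: fibre_def extend_top_def wposet_def)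
    qed
    then have "blockword ws (fibre ws (extend_top ws c n g) (Suc n)) j = drop (c ! j) (ws ! j)"
      by (simp add: blockword_def map_nth_upt_drop)
    then show "map (blockword ws (fibre ws (extend_top ws c n g) (Suc n))) [0..<length ws] ! j = drops c ws ! j"
      using j len by (simp add: drops_nth)
  qed
qed

lemma sum_opmaps_Suc:
  "(\<Sum>f\<in>opmaps ws (Suc n). G f) =
     (\<Sum>c\<in>splits ws. \<Sum>g\<in>opmaps (takes c ws) n. G (extend_top ws c n g))"
proof -
  have "(\<Sum>c\<in>splits ws. \<Sum>g\<in>opmaps (takes c ws) n. G (extend_top ws c n g))
      = (\<Sum>(c, g)\<in>Sigma (splits ws) (\<lambda>c. opmaps (takes c ws) n). G (extend_top ws c n g))"
    by (simp add: sum.Sigma)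
  also have "\<dots> = (\<Sum>f\<in>opmaps ws (Suc n). G f)"
    by (rule sum.reindex_bij_witness[where j = "\<lambda>(c, g). extend_top ws c n g"
          and i = "\<lambda>f. (level_cut ws n f, restrict f (wposet (takes (level_cut ws n f) ws)))"])
      (auto simp: extend_top_restrict level_cut_splits restrict_level_cut_opmaps
        level_cut_extend_top restrict_extend_top extend_top_opmaps)
  finally show ?thesis ..
qed

lemma pair_shuffles_tpow:
  fixes y :: "'d::finite list \<Rightarrow> real"
  shows "pair_shuffles (tpow y n) ws = (\<Sum>f\<in>opmaps ws n. \<Prod>i\<in>{1..n}. pair_shuffles y (fibre_words ws f i))"
proof (induction n arbitrary: ws)
  case 0
  show ?case
  proof (cases "\<forall>\<tau>\<in>set ws. \<tau> = []")
    case True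
    then have "wposet ws = {}" using nth_mem by (fastforce simp: wposet_def)
    then have "opmaps ws 0 = {\<lambda>_. undefined}" by (auto simp: opmaps_def order_pres_def)
    then show ?thesis using True by (simp add: pair_shuffles_tone tone_def[symmetric])
  next
    case False
    then obtain j where "j < length ws" "ws ! j \<noteq> []" by (auto simp: in_set_conv_nth)
    then have "wposet ws \<noteq> {}" by (auto simp: wposet_def)
    then have "opmaps ws 0 = {}" by (auto simp: opmaps_def PiE_eq_empty_iff)
    then show ?thesis using False by (simp add: pair_shuffles_tone tone_def[symmetric])
  qed
next
  case (Suc n)
  have "pair_shuffles (tpow y (Suc n)) ws
      = (\<Sum>c\<in>splits ws. pair_shuffles (tpow y n) (takes c ws) * pair_shuffles y (drops c ws))"
    by (simp only: tpow_Suc_right pair_shuffles_tmul)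
  also have "\<dots> = (\<Sum>c\<in>splits ws. \<Sum>g\<in>opmaps (takes c ws) n.
      (\<Prod>i\<in>{1..n}. pair_shuffles y (fibre_words (takes c ws) g i)) * pair_shuffles y (drops c ws))"
    by (simp add: Suc.IH sum_distrib_right)
  also have "\<dots> = (\<Sum>c\<in>splits ws. \<Sum>g\<in>opmaps (takes c ws) n.
      \<Prod>i\<in>{1..Suc n}. pair_shuffles y (fibre_words ws (extend_top ws c n g) i))"
  proof (intro sum.cong refl)
    fix c g assume c: "c \<in> splits ws" and g: "g \<in> opmaps (takes c ws) n"
    have "(\<Prod>i\<in>{1..n}. pair_shuffles y (fibre_words (takes c ws) g i))
        = (\<Prod>i\<in>{1..n}. pair_shuffles y (fibre_words ws (extend_top ws c n g) i))"
      by (rule prod.cong[OF refl]) (simp add: fibre_words_extend_top_low[OF c g])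
    then show "(\<Prod>i\<in>{1..n}. pair_shuffles y (fibre_words (takes c ws) g i)) * pair_shuffles y (drops c ws)
        = (\<Prod>i\<in>{1..Suc n}. pair_shuffles y (fibre_words ws (extend_top ws c n g) i))"
      by (simp add: prod.cl_ivl_Suc fibre_words_extend_top_top[OF c g])
  qed
  finally show ?case by (simp only: sum_opmaps_Suc)
qed

lemma card_wposet: "card (wposet ws) = total_length ws"
proof -
  have "card (wposet ws) = (\<Sum>j<length ws. length (ws ! j))"
    by (simp add: wposet_eq card_SigmaI)
  also have "\<dots> = total_length ws" by (simp add: total_length_def sum_list_sum_nth atLeast0LessThan)
  finally show ?thesis .
qed

lemma fibre_subset: "fibre ws f i \<subseteq> wposet ws"
  by (auto simp: fibre_def)

lemma fibre_words_all_Nil_iff: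
  "(\<forall>\<tau>\<in>set (fibre_words ws f i). \<tau> = []) \<longleftrightarrow> fibre ws f i = {}"
proof
  assume all_Nil: "\<forall>\<tau>\<in>set (fibre_words ws f i). \<tau> = []"
  show "fibre ws f i = {}"
  proof (rule ccontr)
    assume "fibre ws f i \<noteq> {}"
    then obtain j p where jp: "(j, p) \<in> fibre ws f i" by auto
    then have j: "j < length ws" using fibre_subset by (force simp: wposet_def)
    have fin: "finite {q. (j, q) \<in> fibre ws f i}"
      by (rule finite_subset[of _ "snd ` wposet ws"]) (use fibre_subset in force)+
    have "p \<in> set (sorted_list_of_set {q. (j, q) \<in> fibre ws f i})" using fin jp by simp
    then have "blockword ws (fibre ws f i) j \<noteq> []" by (auto simp: blockword_def)
    moreover have "blockword ws (fibre ws f i) j \<in> set (fibre_words ws f i)"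
      using j by (auto simp: fibre_words_def)
    ultimately show False using all_Nil by auto
  qed
next
  assume "fibre ws f i = {}"
  then show "\<forall>\<tau>\<in>set (fibre_words ws f i). \<tau> = []" by (auto simp: fibre_words_def blockword_def)
qed

lemma opsurjs_wposet_eq: "opsurjs (wposet ws) wle m = {f \<in> opmaps ws m. f ` wposet ws = {1..m}}"
  by (auto simp: opsurjs_def opmaps_def)

lemma pair_shuffles_tpow_opsurjs:
  fixes y :: "'d::finite list \<Rightarrow> real"
  assumes y0: "y [] = 0"
  shows "pair_shuffles (tpow y m) ws =
    (\<Sum>f\<in>opsurjs (wposet ws) wle m. \<Prod>i\<in>{1..m}. pair_shuffles y (fibre_words ws f i))"
  unfolding pair_shuffles_tpow
proof (rule sum.mono_neutral_right)
  show "\<forall>f\<in>opmaps ws m - opsurjs (wposet ws) wle m.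
      (\<Prod>i\<in>{1..m}. pair_shuffles y (fibre_words ws f i)) = 0"
  proof
    fix f assume f: "f \<in> opmaps ws m - opsurjs (wposet ws) wle m"
    then have "f ` wposet ws \<noteq> {1..m}" by (auto simp: opsurjs_wposet_eq)
    moreover have "f ` wposet ws \<subseteq> {1..m}" using f opmaps_range by blast
    ultimately obtain i where i: "i \<in> {1..m}" "i \<notin> f ` wposet ws" by blast
    then have "fibre ws f i = {}" by (auto simp: fibre_def)
    then have "pair_shuffles y (fibre_words ws f i) = 0"
      using fibre_words_all_Nil_iff[of ws f i] by (simp add: pair_shuffles_all_Nil y0)
    with i(1) show "(\<Prod>i\<in>{1..m}. pair_shuffles y (fibre_words ws f i)) = 0"
      by (metis finite_atLeastAtMost prod_zero_iff)
  qed
qed (auto simp: opsurjs_wposet_eq)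

lemma inj_on_fibre:
  assumes f: "f \<in> opsurjs (wposet ws) wle m"
  shows "inj_on (fibre ws f) {1..m}"
proof (rule inj_onI)
  fix i j assume i: "i \<in> {1..m}" and e: "fibre ws f i = fibre ws f j"
  have "i \<in> f ` wposet ws" using i f by (simp add: opsurjs_def)
  then obtain x where "x \<in> wposet ws" "f x = i" by auto
  with e show "i = j" by (auto simp: fibre_def)
qed

definition block_moments :: "('d list \<Rightarrow> real) \<Rightarrow> 'd list list \<Rightarrow> (nat \<times> nat) set set \<Rightarrow> real" where
  "block_moments \<mu> ws a = (\<Prod>B\<in>a. pair_shuffles \<mu> (map (blockword ws B) [0..<length ws]))"

lemma prod_fibre_words_kernel:
  assumes f: "f \<in> opsurjs (wposet ws) wle m"
  shows "(\<Prod>i\<in>{1..m}. pair_shuffles \<mu> (fibre_words ws f i)) = block_moments \<mu> ws (kernel (wposet ws) f)"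
proof -
  have kernel_eq: "kernel (wposet ws) f = fibre ws f ` {1..m}"
    using f unfolding kernel_def opsurjs_def fibre_def by simp
  show ?thesis unfolding block_moments_def kernel_eq fibre_words_def
    by (subst prod.reindex[OF inj_on_fibre[OF f]]) (simp add: o_def)
qed

lemma pair_shuffles_tpow_block_moments:
  fixes y :: "'d::finite list \<Rightarrow> real"
  assumes y0: "y [] = 0"
  shows "pair_shuffles (tpow y m) ws =
    (\<Sum>f\<in>opsurjs (wposet ws) wle m. block_moments y ws (kernel (wposet ws) f))"
  unfolding pair_shuffles_tpow_opsurjs[of y, OF y0] by (intro sum.cong refl prod_fibre_words_kernel)

section \<open>Logarithm and exponential against shuffle products\<close>

lemma pair_shuffles_tpow_tsub_one:
  fixes \<mu> :: "'d::finite list \<Rightarrow> real"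
  assumes m0: "\<mu> [] = 1"
  shows "pair_shuffles (tpow (tsub_one \<mu>) m) ws =
    (\<Sum>f\<in>opsurjs (wposet ws) wle m. block_moments \<mu> ws (kernel (wposet ws) f))"
proof -
  have fibre: "pair_shuffles (tsub_one \<mu>) (fibre_words ws f i) = pair_shuffles \<mu> (fibre_words ws f i)"
    if "f \<in> opsurjs (wposet ws) wle m" "i \<in> {1..m}" for f i
  proof -
    have "i \<in> f ` wposet ws" using that by (simp add: opsurjs_def)
    then have "fibre ws f i \<noteq> {}" by (auto simp: fibre_def)
    then show ?thesis
      using fibre_words_all_Nil_iff[of ws f i] by (simp add: pair_shuffles_tsub_one pair_shuffles_tone)
  qed
  have "pair_shuffles (tpow (tsub_one \<mu>) m) ws =
      (\<Sum>f\<in>opsurjs (wposet ws) wle m. \<Prod>i\<in>{1..m}. pair_shuffles (tsub_one \<mu>) (fibre_words ws f i))"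
    by (rule pair_shuffles_tpow_opsurjs[of "tsub_one \<mu>", OF tsub_one_Nil[of \<mu>, OF m0]])
  also have "\<dots> = (\<Sum>f\<in>opsurjs (wposet ws) wle m. \<Prod>i\<in>{1..m}. pair_shuffles \<mu> (fibre_words ws f i))"
    by (rule sum.cong[OF refl], rule prod.cong[OF refl], rule fibre)
  also have "\<dots> = (\<Sum>f\<in>opsurjs (wposet ws) wle m. block_moments \<mu> ws (kernel (wposet ws) f))"
    by (intro sum.cong refl prod_fibre_words_kernel)
  finally show ?thesis .
qed

lemma pair_shuffles_tlog:
  fixes \<mu> :: "'d::finite list \<Rightarrow> real"
  assumes m0: "\<mu> [] = 1"
  shows "pair_shuffles (tlog \<mu>) ws = (\<Sum>m\<in>{1..total_length ws}. (-1) ^ (m - 1) / real m *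
      (\<Sum>f\<in>opsurjs (wposet ws) wle m. block_moments \<mu> ws (kernel (wposet ws) f)))"
proof -
  define L where "L = total_length ws"
  have "pair_shuffles (tlog \<mu>) ws
      = pair_shuffles (\<lambda>w. \<Sum>n<L. (-1) ^ n / real (Suc n) * tpow (tsub_one \<mu>) (Suc n) w) ws"
    by (rule pair_shuffles_cong, rule tlog_eq_finite_sum[of \<mu>, OF m0]) (simp add: L_def)
  also have "\<dots> = (\<Sum>n<L. (-1) ^ n / real (Suc n) * pair_shuffles (tpow (tsub_one \<mu>) (Suc n)) ws)"
    by (subst pair_shuffles_sum, simp, intro sum.cong refl, rule pair_shuffles_scale)
  also have "\<dots> = (\<Sum>m\<in>{1..L}. (-1) ^ (m - 1) / real m * pair_shuffles (tpow (tsub_one \<mu>) m) ws)"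
    by (rule sum.reindex_bij_witness[where i = "\<lambda>m. m - 1" and j = Suc]) auto
  finally show ?thesis by (simp add: L_def pair_shuffles_tpow_tsub_one[of \<mu>, OF m0])
qed

lemma pair_shuffles_tlog_Orp:
  fixes \<mu> :: "'d::finite list \<Rightarrow> real"
  assumes m0: "\<mu> [] = 1" and ne: "wposet ws \<noteq> {}"
  shows "pair_shuffles (tlog \<mu>) ws = (\<Sum>a\<in>Orp (wposet ws) wle.
           (-1) ^ (card a - 1) * real (opfact (wposet ws) wle a) / real (card a) * block_moments \<mu> ws a)"
proof -
  have "pair_shuffles (tlog \<mu>) ws = (\<Sum>m\<in>{1..card (wposet ws)}. (-1) ^ (m - 1) / real m *
      (\<Sum>f\<in>opsurjs (wposet ws) wle m. block_moments \<mu> ws (kernel (wposet ws) f)))"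
    by (simp add: pair_shuffles_tlog[of \<mu>, OF m0] card_wposet)
  also have "\<dots> = (\<Sum>a\<in>Orp (wposet ws) wle.
      (-1) ^ (card a - 1) / real (card a) * real (opfact (wposet ws) wle a) * block_moments \<mu> ws a)"
    by (rule sum_opsurjs_by_kernel[OF finite_wposet ne])
  finally show ?thesis by (simp add: mult_ac)
qed

text \<open>Substitution of a series \<open>y\<close> with \<open>y [] = 0\<close> into a formal power series is
  multiplicative (\<open>tsubst_mult\<close>); this reduces \<open>exp (log \<mu>) = \<mu>\<close> to the identity
  \<open>exp \<circ> log = 1 + X\<close> of formal power series.\<close>

definition tsubst :: "('d list \<Rightarrow> real) \<Rightarrow> real fps \<Rightarrow> 'd list \<Rightarrow> real" where
  "tsubst y F w = (\<Sum>n\<le>length w. fps_nth F n * tpow y n w)"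

lemma tsubst_eq_sum:
  fixes y :: "'d list \<Rightarrow> real"
  assumes y0: "y [] = 0" and w: "length w \<le> N"
  shows "tsubst y F w = (\<Sum>n\<le>N. fps_nth F n * tpow y n w)"
  unfolding tsubst_def
proof (rule sum.mono_neutral_left)
  show "\<forall>i\<in>{..N} - {..length w}. fps_nth F i * tpow y i w = 0"
    using tpow_vanish[of y, OF y0] by auto
qed (use w in auto)

lemma tsubst_mult:
  fixes y :: "'d list \<Rightarrow> real"
  assumes y0: "y [] = 0"
  shows "tsubst y (F * G) = tmul (tsubst y F) (tsubst y G)"
proof
  fix w :: "'d list"
  define N where "N = length w"
  have "tmul (tsubst y F) (tsubst y G) w =
      (\<Sum>k\<le>N. (\<Sum>i\<le>N. fps_nth F i * tpow y i (take k w)) * (\<Sum>j\<le>N. fps_nth G j * tpow y j (drop k w)))"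
    unfolding tmul_def N_def by (intro sum.cong refl arg_cong2[where f="(*)"] tsubst_eq_sum[of y, OF y0]) auto
  also have "\<dots> = (\<Sum>k\<le>N. \<Sum>i\<le>N. \<Sum>j\<le>N. fps_nth F i * fps_nth G j * (tpow y i (take k w) * tpow y j (drop k w)))"
    by (simp add: sum_product mult_ac)
  also have "\<dots> = (\<Sum>i\<le>N. \<Sum>k\<le>N. \<Sum>j\<le>N. fps_nth F i * fps_nth G j * (tpow y i (take k w) * tpow y j (drop k w)))"
    by (rule sum.swap)
  also have "\<dots> = (\<Sum>i\<le>N. \<Sum>j\<le>N. \<Sum>k\<le>N. fps_nth F i * fps_nth G j * (tpow y i (take k w) * tpow y j (drop k w)))"
    by (rule sum.cong[OF refl], rule sum.swap)
  also have "\<dots> = (\<Sum>i\<le>N. \<Sum>j\<le>N. fps_nth F i * fps_nth G j * (\<Sum>k\<le>N. tpow y i (take k w) * tpow y j (drop k w)))"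
    by (simp add: sum_distrib_left)
  also have "\<dots> = (\<Sum>i\<le>N. \<Sum>j\<le>N. fps_nth F i * fps_nth G j * tpow y (i + j) w)"
    by (simp add: tpow_add tmul_def N_def)
  also have "\<dots> = (\<Sum>(i, j)\<in>{(i, j). i + j \<le> N}. fps_nth F i * fps_nth G j * tpow y (i + j) w)"
  proof -
    have "(\<Sum>i\<le>N. \<Sum>j\<le>N. fps_nth F i * fps_nth G j * tpow y (i + j) w) =
        (\<Sum>(i, j)\<in>{..N} \<times> {..N}. fps_nth F i * fps_nth G j * tpow y (i + j) w)"
      by (simp add: sum.cartesian_product)
    also have "\<dots> = (\<Sum>(i, j)\<in>{(i, j). i + j \<le> N}. fps_nth F i * fps_nth G j * tpow y (i + j) w)"
    proof (rule sum.mono_neutral_right)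
      show "\<forall>p\<in>{..N} \<times> {..N} - {(i, j). i + j \<le> N}.
          (case p of (i, j) \<Rightarrow> fps_nth F i * fps_nth G j * tpow y (i + j) w) = 0"
        using tpow_vanish[of y, OF y0] by (auto simp: N_def) (meson not_le)
    qed auto
    finally show ?thesis .
  qed
  also have "\<dots> = (\<Sum>k\<le>N. \<Sum>i\<le>k. fps_nth F i * fps_nth G (k - i) * tpow y k w)"
    by (subst sum.triangle_reindex_eq) simp
  also have "\<dots> = tsubst y (F * G) w"
    by (simp add: tsubst_def N_def fps_mult_nth sum_distrib_right atLeast0AtMost)
  finally show "tsubst y (F * G) w = tmul (tsubst y F) (tsubst y G) w" ..
qed

lemma tsubst_one: "tsubst y 1 = tone" for y :: "'d list \<Rightarrow> real"
proof
  fix w :: "'d list"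
  have "tsubst y 1 w = (\<Sum>n\<le>length w. if n = 0 then tone w else 0)"
    unfolding tsubst_def by (intro sum.cong refl) auto
  then show "tsubst y 1 w = tone w" by simp
qed

lemma tsubst_power:
  fixes y :: "'d list \<Rightarrow> real"
  assumes y0: "y [] = 0"
  shows "tsubst y (F ^ n) = tpow (tsubst y F) n"
  by (induction n) (simp_all add: tsubst_one tsubst_mult[of y, OF y0] tpow.simps(2))

lemma tsubst_X:
  fixes y :: "'d list \<Rightarrow> real"
  assumes y0: "y [] = 0"
  shows "tsubst y fps_X = y"
proof
  fix w :: "'d list"
  show "tsubst y fps_X w = y w"
  proof (cases w)
    case Nil then show ?thesis using y0 by (simp add: tsubst_def)
  next
    case (Cons a v)
    have "tsubst y fps_X w = (\<Sum>n\<le>length w. if n = 1 then tpow y 1 w else 0)"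
      unfolding tsubst_def by (intro sum.cong refl) (auto simp: fps_X_def)
    also have "\<dots> = tpow y 1 w" by (subst sum.delta) (use Cons in auto)
    finally show ?thesis by (simp add: tpow.simps(2) tmul_tone_right)
  qed
qed

lemma tsubst_add: "tsubst y (F + G) = (\<lambda>w. tsubst y F w + tsubst y G w)"
  by (rule ext) (simp add: tsubst_def algebra_simps sum.distrib)

lemma tlog_eq_tsubst:
  fixes \<mu> :: "'d list \<Rightarrow> real"
  assumes m0: "\<mu> [] = 1"
  shows "tlog \<mu> = tsubst (tsub_one \<mu>) (fps_ln 1)"
proof
  fix w :: "'d list"
  have "tlog \<mu> w = (\<Sum>n<length w. (-1) ^ n / real (Suc n) * tpow (tsub_one \<mu>) (Suc n) w)"
    by (rule tlog_eq_finite_sum[of \<mu>, OF m0]) simp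
  also have "\<dots> = (\<Sum>m\<in>{1..length w}. fps_nth (fps_ln 1) m * tpow (tsub_one \<mu>) m w)"
    by (rule sum.reindex_bij_witness[where i = "\<lambda>m. m - 1" and j = Suc]) (auto simp: fps_ln_nth)
  also have "\<dots> = (\<Sum>m\<le>length w. fps_nth (fps_ln 1) m * tpow (tsub_one \<mu>) m w)"
    by (rule sum.mono_neutral_left) (auto simp: fps_ln_nth)
  finally show "tlog \<mu> w = tsubst (tsub_one \<mu>) (fps_ln 1) w" by (simp add: tsubst_def)
qed

lemma fps_exp_compose_ln: "fps_exp (1::real) oo fps_ln 1 = 1 + fps_X"
proof -
  have b0: "fps_nth (fps_exp (1::real) - 1) 0 = 0" by simp
  have b1: "fps_nth (fps_exp (1::real) - 1) 1 \<noteq> 0" by simp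
  have "(fps_exp (1::real) - 1) oo fps_ln 1 = fps_X"
    using fps_inv_right[OF b0 b1] fps_ln_fps_exp_inv[of "1::real"] by simp
  then have "(fps_exp 1 oo fps_ln 1) - 1 = (fps_X :: real fps)"
    by (simp add: fps_compose_sub_distrib)
  then show ?thesis by (simp add: algebra_simps)
qed

lemma texp_tlog:
  fixes \<mu> :: "'d list \<Rightarrow> real"
  assumes m0: "\<mu> [] = 1" and w: "length w \<le> N"
  shows "\<mu> w = (\<Sum>n\<le>N. 1 / fact n * tpow (tlog \<mu>) n w)"
proof -
  let ?y = "tsub_one \<mu>" and ?L = "fps_ln (1::real)"
  have y0: "?y [] = 0" using tsub_one_Nil[of \<mu>, OF m0] .
  have "(\<Sum>n\<le>N. 1 / fact n * tpow (tlog \<mu>) n w) = (\<Sum>n\<le>N. 1 / fact n * (\<Sum>m\<le>N. fps_nth (?L ^ n) m * tpow ?y m w))"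
    by (simp add: tlog_eq_tsubst[of \<mu>, OF m0] tsubst_power[of "tsub_one \<mu>", OF y0, symmetric]
        tsubst_eq_sum[of "tsub_one \<mu>", OF y0 w])
  also have "\<dots> = (\<Sum>m\<le>N. (\<Sum>n\<le>N. 1 / fact n * fps_nth (?L ^ n) m) * tpow ?y m w)"
    by (simp add: sum_distrib_left sum_distrib_right mult_ac, rule sum.swap)
  also have "\<dots> = (\<Sum>m\<le>N. fps_nth (fps_exp 1 oo ?L) m * tpow ?y m w)"
  proof (rule sum.cong[OF refl])
    fix m assume m: "m \<in> {..N}"
    have "(\<Sum>n\<le>N. 1 / fact n * fps_nth (?L ^ n) m) = (\<Sum>n\<in>{0..m}. 1 / fact n * fps_nth (?L ^ n) m)"
    proof (rule sum.mono_neutral_right)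
      show "\<forall>i\<in>{..N} - {0..m}. 1 / fact i * fps_nth (?L ^ i) m = 0"
        using startsby_zero_power_prefix[of ?L] by auto
    qed (use m in auto)
    then show "(\<Sum>n\<le>N. 1 / fact n * fps_nth (?L ^ n) m) * tpow ?y m w = fps_nth (fps_exp 1 oo ?L) m * tpow ?y m w"
      by (simp add: fps_compose_nth)
  qed
  also have "\<dots> = tsubst ?y (fps_exp 1 oo ?L) w" by (simp add: tsubst_eq_sum[of "tsub_one \<mu>", OF y0 w])
  also have "\<dots> = tone w + tsub_one \<mu> w"
    by (simp add: fps_exp_compose_ln tsubst_add tsubst_one tsubst_X[of "tsub_one \<mu>", OF y0])
  also have "\<dots> = \<mu> w" by (simp add: tsub_one_def)
  finally show ?thesis ..
qed


lemma moment_from_cumulants: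
  fixes \<mu> :: "'d::finite list \<Rightarrow> real"
  assumes m0: "\<mu> [] = 1" and ne: "\<tau> \<noteq> []"
  shows "tpair \<mu> (ew \<tau>) = (\<Sum>a\<in>Orp (wposet [\<tau>]) wle.
           1 / fact (card a) * (\<Prod>B\<in>a. tpair (tlog \<mu>) (ew (blockword [\<tau>] B 0))))"
proof -
  let ?k = "tlog \<mu>" and ?P = "wposet [\<tau>]"
  have k0: "?k [] = 0" by (rule tlog_Nil[of \<mu>, OF m0])
  have Pne: "?P \<noteq> {}" using ne by (auto simp: wposet_def)
  have chain: "wle x y \<or> wle y x" if "x \<in> ?P" "y \<in> ?P" for x y
    using that by (auto simp: wposet_def wle_def)
  have card_P: "card ?P = length \<tau>" by (simp add: card_wposet)
  have "tpair \<mu> (ew \<tau>) = (\<Sum>n\<le>length \<tau>. 1 / fact n * tpow ?k n \<tau>)"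
    unfolding tpair_ew by (rule texp_tlog[of \<mu>, OF m0]) simp
  also have "\<dots> = (\<Sum>n\<in>{1..card ?P}. 1 / fact n * tpow ?k n \<tau>)"
    unfolding card_P by (rule sum.mono_neutral_right) (auto simp: ne tone_def ew_def Suc_le_eq)
  also have "\<dots> = (\<Sum>n\<in>{1..card ?P}. 1 / fact n *
      (\<Sum>f\<in>opsurjs ?P wle n. block_moments ?k [\<tau>] (kernel ?P f)))"
    by (simp only: pair_shuffles_single[symmetric] pair_shuffles_tpow_block_moments[of ?k, OF k0])
  also have "\<dots> = (\<Sum>a\<in>Orp ?P wle. 1 / fact (card a) * real (opfact ?P wle a) * block_moments ?k [\<tau>] a)"
    by (rule sum_opsurjs_by_kernel[OF finite_wposet Pne])
  also have "\<dots> = (\<Sum>a\<in>Orp ?P wle. 1 / fact (card a) * (\<Prod>B\<in>a. tpair ?k (ew (blockword [\<tau>] B 0))))"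
    by (intro sum.cong refl)
      (simp add: opfact_chain_eq_1[OF finite_wposet chain] block_moments_def pair_shuffles_single tpair_ew)
  finally show ?thesis .
qed

section \<open>Cumulants of two words\<close>

text \<open>The \<open>n\<close>-th power of a function of two words under deconcatenation of both words: for
  \<open>F u v = \<langle>y, e\<^sub>u \<squnion> e\<^sub>v\<rangle>\<close> it is \<open>\<langle>y\<^sup>n, e\<^sub>u \<squnion> e\<^sub>v\<rangle>\<close>
  (\<open>pair_shuffles_tpow_pair\<close>).\<close>

fun biconv_pow :: "('d list \<Rightarrow> 'd list \<Rightarrow> real) \<Rightarrow> nat \<Rightarrow> 'd list \<Rightarrow> 'd list \<Rightarrow> real" where
  "biconv_pow F 0 u v = (if u = [] \<and> v = [] then 1 else 0)"
| "biconv_pow F (Suc n) u v =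
     (\<Sum>i\<le>length u. \<Sum>j\<le>length v. F (take i u) (take j v) * biconv_pow F n (drop i u) (drop j v))"

lemma splits_pair: "(\<Sum>c\<in>splits [u, v]. g c) = (\<Sum>i\<le>length u. \<Sum>j\<le>length v. g [i, j])"
  by (simp add: sum_splits_Cons)

lemma pair_shuffles_tpow_pair:
  fixes y :: "'d::finite list \<Rightarrow> real"
  shows "pair_shuffles (tpow y n) [u, v] = biconv_pow (\<lambda>u v. pair_shuffles y [u, v]) n u v"
proof (induction n arbitrary: u v)
  case 0
  show ?case by (simp add: tone_def[symmetric] pair_shuffles_tone)
next
  case (Suc n)
  show ?case by (simp add: tpow.simps(2) pair_shuffles_tmul splits_pair Suc.IH)
qed

lemma biconv_pow_1: "biconv_pow F (Suc 0) u v = F u v"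
proof -
  have "biconv_pow F (Suc 0) u v = (\<Sum>i\<le>length u. \<Sum>j\<le>length v. if i = length u \<and> j = length v then F u v else 0)"
    unfolding biconv_pow.simps by (intro sum.cong refl) auto
  also have "\<dots> = (\<Sum>i\<le>length u. if i = length u then F u v else 0)"
    by (intro sum.cong refl, rename_tac i, case_tac "i = length u") (simp_all add: sum.delta)
  also have "\<dots> = F u v" by (simp add: sum.delta)
  finally show ?thesis .
qed

definition words_over :: "'d set \<Rightarrow> 'd list set" where "words_over I = {w. set w \<subseteq> I}"

lemma words_over_take: "w \<in> words_over I \<Longrightarrow> take k w \<in> words_over I"
  by (auto simp: words_over_def dest: in_set_takeD)

lemma words_over_drop: "w \<in> words_over I \<Longrightarrow> drop k w \<in> words_over I"
  by (auto simp: words_over_def dest: in_set_dropD)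

lemma biconv_pow_local:
  assumes agree: "\<And>u' v'. u' \<in> words_over I \<Longrightarrow> v' \<in> words_over J \<Longrightarrow> length u' + length v' < K \<Longrightarrow> F u' v' = G u' v'"
  shows "u \<in> words_over I \<Longrightarrow> v \<in> words_over J \<Longrightarrow> length u + length v < K \<Longrightarrow> biconv_pow F n u v = biconv_pow G n u v"
proof (induction n arbitrary: u v)
  case 0 then show ?case by simp
next
  case (Suc n)
  show ?case unfolding biconv_pow.simps
  proof (intro sum.cong refl arg_cong2[where f = "(*)"])
    fix i j
    show "F (take i u) (take j v) = G (take i u) (take j v)"
      using Suc.prems by (intro agree words_over_take) auto
    show "biconv_pow F n (drop i u) (drop j v) = biconv_pow G n (drop i u) (drop j v)"
      using Suc.prems by (intro Suc.IH words_over_drop) auto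
  qed
qed

lemma biconv_pow_top:
  assumes agree: "\<And>u' v'. u' \<in> words_over I \<Longrightarrow> v' \<in> words_over J \<Longrightarrow> length u' + length v' < K \<Longrightarrow> F u' v' = G u' v'"
    and F0: "F [] [] = 0" and G0: "G [] [] = 0"
    and u: "u \<in> words_over I" and v: "v \<in> words_over J" and K: "length u + length v \<le> K"
  shows "biconv_pow F (Suc (Suc n)) u v = biconv_pow G (Suc (Suc n)) u v"
  unfolding biconv_pow.simps(2)[of _ "Suc n"]
proof (intro sum.cong refl)
  fix i j assume i: "i \<in> {..length u}" and j: "j \<in> {..length v}"
  show "F (take i u) (take j v) * biconv_pow F (Suc n) (drop i u) (drop j v) =
      G (take i u) (take j v) * biconv_pow G (Suc n) (drop i u) (drop j v)"
  proof (cases "i = 0 \<and> j = 0")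
    case True then show ?thesis using F0 G0 by simp
  next
    case False
    then have dl: "length (drop i u) + length (drop j v) < K" using i j K by auto
    have pe: "biconv_pow F (Suc n) (drop i u) (drop j v) = biconv_pow G (Suc n) (drop i u) (drop j v)"
      by (rule biconv_pow_local[OF agree words_over_drop[OF u] words_over_drop[OF v] dl])
    show ?thesis
    proof (cases "i = length u \<and> j = length v")
      case True then show ?thesis using F0 G0 by simp
    next
      case False
      then have "length (take i u) + length (take j v) < K" using i j K by auto
      then have "F (take i u) (take j v) = G (take i u) (take j v)"
        by (intro agree words_over_take u v)
      then show ?thesis using pe by simp
    qed
  qed
qed

lemma if_zero_mult: "(if c then a else 0) * (p::real) = (if c then a * p else 0)" by simp

text \<open>\<open>tprim \<kappa>\<close> is the primitive element \<open>\<kappa> \<otimes> 1 + 1 \<otimes> \<kappa>\<close> of the tensor square: its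
  powers are binomial, so its exponential is \<open>exp \<kappa> \<otimes> exp \<kappa>\<close>, whose coefficients are the
  products \<open>\<mu> u * \<mu> v\<close>.\<close>

definition tprim :: "('d list \<Rightarrow> real) \<Rightarrow> 'd list \<Rightarrow> 'd list \<Rightarrow> real" where
  "tprim \<kappa> u v = (if v = [] then \<kappa> u else 0) + (if u = [] then \<kappa> v else 0)"

lemma binomial_sum_Suc:
  fixes a b :: "nat \<Rightarrow> real"
  shows "(\<Sum>k\<le>n. real (n choose k) * a (Suc k) * b (n - k)) + (\<Sum>k\<le>n. real (n choose k) * a k * b (Suc n - k))
       = (\<Sum>k\<le>Suc n. real (Suc n choose k) * a k * b (Suc n - k))"
proof -
  have h1: "(\<Sum>k\<le>Suc n. real (Suc n choose k) * a k * b (Suc n - k))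
      = a 0 * b (Suc n) + (\<Sum>k\<le>n. real (Suc n choose Suc k) * a (Suc k) * b (n - k))"
    by (simp add: sum.atMost_Suc_shift del: sum.atMost_Suc)
  have h2: "(\<Sum>k\<le>n. real (Suc n choose Suc k) * a (Suc k) * b (n - k))
      = (\<Sum>k\<le>n. real (n choose k) * a (Suc k) * b (n - k)) + (\<Sum>k\<le>n. real (n choose Suc k) * a (Suc k) * b (n - k))"
    by (simp add: sum.distrib algebra_simps)
  have h3: "(\<Sum>k\<le>Suc n. real (n choose k) * a k * b (Suc n - k))
      = a 0 * b (Suc n) + (\<Sum>k\<le>n. real (n choose Suc k) * a (Suc k) * b (n - k))"
    by (simp add: sum.atMost_Suc_shift del: sum.atMost_Suc)
  have h4: "(\<Sum>k\<le>Suc n. real (n choose k) * a k * b (Suc n - k)) = (\<Sum>k\<le>n. real (n choose k) * a k * b (Suc n - k))"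
    by simp
  show ?thesis using h1 h2 h3 h4 by linarith
qed

lemma tpow_Suc_eq_sum: "(\<Sum>i\<le>length u. \<kappa> (take i u) * tpow \<kappa> k (drop i u)) = tpow \<kappa> (Suc k) u"
  by (simp add: tpow.simps(2) tmul_def)

lemma biconv_pow_tprim_Suc:
  fixes \<kappa> :: "'d list \<Rightarrow> real"
  assumes k0: "\<kappa> [] = 0"
  shows "biconv_pow (tprim \<kappa>) (Suc n) u v =
    (\<Sum>i\<le>length u. \<kappa> (take i u) * biconv_pow (tprim \<kappa>) n (drop i u) v) +
    (\<Sum>j\<le>length v. \<kappa> (take j v) * biconv_pow (tprim \<kappa>) n u (drop j v))"
proof -
  let ?p = "\<lambda>i j. biconv_pow (tprim \<kappa>) n (drop i u) (drop j v)"
  have tprim_take: "tprim \<kappa> (take i u) (take j v) =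
      (if j = 0 then \<kappa> (take i u) else 0) + (if i = 0 then \<kappa> (take j v) else 0)"
    if "i \<le> length u" "j \<le> length v" for i j
    using that k0 by (auto simp: tprim_def)
  have "biconv_pow (tprim \<kappa>) (Suc n) u v = (\<Sum>i\<le>length u. \<Sum>j\<le>length v.
      ((if j = 0 then \<kappa> (take i u) else 0) + (if i = 0 then \<kappa> (take j v) else 0)) * ?p i j)"
    by (simp add: tprim_take)
  also have "\<dots> = (\<Sum>i\<le>length u. \<Sum>j\<le>length v. (if j = 0 then \<kappa> (take i u) * ?p i j else 0))
      + (\<Sum>i\<le>length u. \<Sum>j\<le>length v. (if i = 0 then \<kappa> (take j v) * ?p i j else 0))"
    by (simp only: distrib_right sum.distrib if_zero_mult)
  also have "(\<Sum>i\<le>length u. \<Sum>j\<le>length v. (if i = 0 then \<kappa> (take j v) * ?p i j else 0))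
     = (\<Sum>j\<le>length v. \<Sum>i\<le>length u. (if i = 0 then \<kappa> (take j v) * ?p i j else 0))"
    by (rule sum.swap)
  finally show ?thesis by (simp add: sum.delta)
qed

lemma biconv_pow_tprim:
  fixes \<kappa> :: "'d list \<Rightarrow> real"
  assumes k0: "\<kappa> [] = 0"
  shows "biconv_pow (tprim \<kappa>) n u v = (\<Sum>k\<le>n. real (n choose k) * tpow \<kappa> k u * tpow \<kappa> (n - k) v)"
proof (induction n arbitrary: u v)
  case 0
  show ?case by (simp add: tone_def ew_def)
next
  case (Suc n)
  have "(\<Sum>i\<le>length u. \<kappa> (take i u) * biconv_pow (tprim \<kappa>) n (drop i u) v)
      = (\<Sum>k\<le>n. real (n choose k) * tpow \<kappa> (Suc k) u * tpow \<kappa> (n - k) v)"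
    by (simp add: Suc.IH sum_distrib_left sum.swap[of _ "{..length u}"] mult_ac tpow_Suc_eq_sum[symmetric]
         sum_distrib_right)
  moreover have "(\<Sum>j\<le>length v. \<kappa> (take j v) * biconv_pow (tprim \<kappa>) n u (drop j v))
      = (\<Sum>k\<le>n. real (n choose k) * tpow \<kappa> k u * (\<Sum>j\<le>length v. \<kappa> (take j v) * tpow \<kappa> (n - k) (drop j v)))"
    by (simp add: Suc.IH sum_distrib_left sum.swap[of _ "{..length v}"] mult_ac)
  moreover have "\<dots> = (\<Sum>k\<le>n. real (n choose k) * tpow \<kappa> k u * tpow \<kappa> (Suc n - k) v)"
    by (intro sum.cong refl) (simp add: tpow_Suc_eq_sum Suc_diff_le)
  ultimately show ?case
    unfolding biconv_pow_tprim_Suc[of \<kappa>, OF k0]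
    by (simp only:) (rule binomial_sum_Suc[of n "\<lambda>k. tpow \<kappa> k u" "\<lambda>k. tpow \<kappa> k v"])
qed

lemma pair_shuffles_texp:
  fixes \<mu> :: "'d::finite list \<Rightarrow> real"
  assumes m0: "\<mu> [] = 1" and N: "length u + length v \<le> N"
  shows "pair_shuffles \<mu> [u, v] = (\<Sum>n\<le>N. 1 / fact n * biconv_pow (\<lambda>u v. pair_shuffles (tlog \<mu>) [u, v]) n u v)"
proof -
  have "pair_shuffles \<mu> [u, v] = pair_shuffles (\<lambda>w. \<Sum>n\<le>N. 1 / fact n * tpow (tlog \<mu>) n w) [u, v]"
    by (rule pair_shuffles_cong, rule texp_tlog[of \<mu>, OF m0]) (use N in simp)
  also have "\<dots> = (\<Sum>n\<le>N. 1 / fact n * pair_shuffles (tpow (tlog \<mu>) n) [u, v])"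
    by (subst pair_shuffles_sum, simp, intro sum.cong refl, rule pair_shuffles_scale)
  finally show ?thesis by (simp add: pair_shuffles_tpow_pair)
qed

lemma mult_texp:
  fixes \<mu> :: "'d list \<Rightarrow> real"
  assumes m0: "\<mu> [] = 1" and N: "length u + length v \<le> N"
  shows "\<mu> u * \<mu> v = (\<Sum>n\<le>N. 1 / fact n * biconv_pow (tprim (tlog \<mu>)) n u v)"
proof -
  let ?k = "tlog \<mu>"
  have k0: "?k [] = 0" by (rule tlog_Nil[of \<mu>, OF m0])
  let ?g = "\<lambda>a b. 1 / fact a * tpow ?k a u * (1 / fact b * tpow ?k b v)"
  have "\<mu> u * \<mu> v = (\<Sum>a\<le>N. 1 / fact a * tpow ?k a u) * (\<Sum>b\<le>N. 1 / fact b * tpow ?k b v)"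
    using texp_tlog[of \<mu> u N, OF m0] texp_tlog[of \<mu> v N, OF m0] N by simp
  also have "\<dots> = (\<Sum>(a, b)\<in>{..N} \<times> {..N}. ?g a b)"
    by (simp add: sum_product sum.cartesian_product)
  also have "\<dots> = (\<Sum>(a, b)\<in>{(a, b). a + b \<le> N}. ?g a b)"
  proof (rule sum.mono_neutral_right)
    show "\<forall>p\<in>{..N} \<times> {..N} - {(a, b). a + b \<le> N}. (case p of (a, b) \<Rightarrow> ?g a b) = 0"
    proof
      fix p assume p: "p \<in> {..N} \<times> {..N} - {(a, b). a + b \<le> N}"
      obtain a b where ab: "p = (a, b)" by (cases p)
      then have "length u < a \<or> length v < b" using p N by auto
      then show "(case p of (a, b) \<Rightarrow> ?g a b) = 0"
        using ab tpow_vanish[of ?k, OF k0] by auto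
    qed
  qed auto
  also have "\<dots> = (\<Sum>n\<le>N. \<Sum>k\<le>n. ?g k (n - k))"
    by (rule sum.triangle_reindex_eq)
  also have "\<dots> = (\<Sum>n\<le>N. 1 / fact n * biconv_pow (tprim ?k) n u v)"
  proof (rule sum.cong[OF refl])
    fix n assume "n \<in> {..N}"
    have "1 / fact n * biconv_pow (tprim ?k) n u v =
        (\<Sum>k\<le>n. 1 / fact n * real (n choose k) * tpow ?k k u * tpow ?k (n - k) v)"
      by (simp add: biconv_pow_tprim[of ?k, OF k0] sum_distrib_left mult_ac)
    also have "\<dots> = (\<Sum>k\<le>n. ?g k (n - k))"
      by (intro sum.cong refl) (simp add: binomial_fact field_simps)
    finally show "(\<Sum>k\<le>n. ?g k (n - k)) = 1 / fact n * biconv_pow (tprim ?k) n u v" ..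
  qed
  finally show ?thesis .
qed

text \<open>Both terms of \<open>\<langle>\<mu>, e\<^sub>u \<squnion> e\<^sub>v\<rangle> - \<mu> u * \<mu> v\<close> are exponential series. If
  \<open>\<langle>\<kappa>, e\<^sub>u\<^sub>' \<squnion> e\<^sub>v\<^sub>'\<rangle> = tprim \<kappa> u' v'\<close> for all shorter pairs, their terms of
  order \<open>\<ge> 2\<close> coincide (\<open>biconv_pow_top\<close>) and only the linear terms survive.\<close>

lemma mixed_moment_defect:
  fixes \<mu> :: "'d::finite list \<Rightarrow> real"
  assumes m0: "\<mu> [] = 1" and u: "u \<in> words_over I" and v: "v \<in> words_over J"
    and agree: "\<And>u' v'. u' \<in> words_over I \<Longrightarrow> v' \<in> words_over J \<Longrightarrow> length u' + length v' < length u + length v \<Longrightarrow>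
        pair_shuffles (tlog \<mu>) [u', v'] = tprim (tlog \<mu>) u' v'"
  shows "pair_shuffles \<mu> [u, v] - \<mu> u * \<mu> v = pair_shuffles (tlog \<mu>) [u, v] - tprim (tlog \<mu>) u v"
proof -
  let ?k = "tlog \<mu>"
  let ?D = "\<lambda>u v. pair_shuffles ?k [u, v]" and ?Z = "tprim ?k"
  have k0: "?k [] = 0" by (rule tlog_Nil[of \<mu>, OF m0])
  define N where "N = length u + length v + 1"
  have D0: "?D [] [] = 0" using k0 by (simp add: pair_shuffles_Nil_left)
  have Z0: "?Z [] [] = 0" using k0 by (simp add: tprim_def)
  have "pair_shuffles \<mu> [u, v] - \<mu> u * \<mu> v = (\<Sum>n\<le>N. 1 / fact n * (biconv_pow ?D n u v - biconv_pow ?Z n u v))"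
    by (simp add: pair_shuffles_texp[of \<mu> u v N, OF m0] mult_texp[of \<mu> u v N, OF m0] N_def
        sum_subtractf right_diff_distrib)
  also have "\<dots> = (\<Sum>n\<le>N. if n = 1 then ?D u v - ?Z u v else 0)"
  proof (rule sum.cong[OF refl])
    fix n assume "n \<in> {..N}"
    show "1 / fact n * (biconv_pow ?D n u v - biconv_pow ?Z n u v) = (if n = 1 then ?D u v - ?Z u v else 0)"
    proof (cases n)
      case 0 then show ?thesis by simp
    next
      case (Suc m)
      show ?thesis
      proof (cases m)
        case 0 then show ?thesis using Suc by (simp add: biconv_pow_1 del: biconv_pow.simps)
      next
        case (Suc m')
        have "biconv_pow ?D (Suc (Suc m')) u v = biconv_pow ?Z (Suc (Suc m')) u v"
          by (rule biconv_pow_top[where F = ?D and G = ?Z, OF agree D0 Z0 u v]) auto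
        then show ?thesis using Suc \<open>n = Suc m\<close> by simp
      qed
    qed
  qed
  also have "\<dots> = ?D u v - ?Z u v" by (subst sum.delta) (simp_all add: N_def)
  finally show ?thesis .
qed

lemma pair_shuffles_Nil_tprim:
  fixes \<kappa> :: "'d::finite list \<Rightarrow> real"
  assumes k0: "\<kappa> [] = 0" and "u = [] \<or> v = []"
  shows "pair_shuffles \<kappa> [u, v] = tprim \<kappa> u v"
  using assms by (auto simp: pair_shuffles_Nil_left pair_shuffles_Nil_right tprim_def)

lemma factorising_pair_shuffles_tlog:
  fixes \<mu> :: "'d::finite list \<Rightarrow> real"
  assumes m0: "\<mu> [] = 1"
    and fac: "\<forall>u\<in>words_over I. \<forall>v\<in>words_over J. pair_shuffles \<mu> [u, v] = \<mu> u * \<mu> v"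
    and "u \<in> words_over I" "v \<in> words_over J"
  shows "pair_shuffles (tlog \<mu>) [u, v] = tprim (tlog \<mu>) u v"
  using assms(3,4)
proof (induction "length u + length v" arbitrary: u v rule: less_induct)
  case less
  have "pair_shuffles \<mu> [u, v] - \<mu> u * \<mu> v = pair_shuffles (tlog \<mu>) [u, v] - tprim (tlog \<mu>) u v"
    by (rule mixed_moment_defect[of \<mu>, OF m0 less.prems]) (use less.hyps in blast)
  then show ?case using fac less.prems by simp
qed

lemma factorises_iff_cross_cumulants_vanish:
  fixes \<mu> :: "'d::finite list \<Rightarrow> real"
  assumes m0: "\<mu> [] = 1"
  shows "(\<forall>u\<in>words_over I. \<forall>v\<in>words_over J. pair_shuffles \<mu> [u, v] = \<mu> u * \<mu> v) \<longleftrightarrow>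
         (\<forall>u\<in>words_over I. \<forall>v\<in>words_over J. u \<noteq> [] \<longrightarrow> v \<noteq> [] \<longrightarrow> pair_shuffles (tlog \<mu>) [u, v] = 0)"
proof
  assume "\<forall>u\<in>words_over I. \<forall>v\<in>words_over J. pair_shuffles \<mu> [u, v] = \<mu> u * \<mu> v"
  from factorising_pair_shuffles_tlog[OF m0 this]
  show "\<forall>u\<in>words_over I. \<forall>v\<in>words_over J. u \<noteq> [] \<longrightarrow> v \<noteq> [] \<longrightarrow> pair_shuffles (tlog \<mu>) [u, v] = 0"
    by (auto simp: tprim_def)
next
  assume van: "\<forall>u\<in>words_over I. \<forall>v\<in>words_over J. u \<noteq> [] \<longrightarrow> v \<noteq> [] \<longrightarrow> pair_shuffles (tlog \<mu>) [u, v] = 0"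
  have k0: "tlog \<mu> [] = 0" by (rule tlog_Nil[of \<mu>, OF m0])
  have DZ: "pair_shuffles (tlog \<mu>) [u, v] = tprim (tlog \<mu>) u v" if "u \<in> words_over I" "v \<in> words_over J" for u v
  proof (cases "u = [] \<or> v = []")
    case True then show ?thesis by (rule pair_shuffles_Nil_tprim[of "tlog \<mu>", OF k0])
  next
    case False then show ?thesis using van that by (simp add: tprim_def)
  qed
  show "\<forall>u\<in>words_over I. \<forall>v\<in>words_over J. pair_shuffles \<mu> [u, v] = \<mu> u * \<mu> v"
  proof (intro ballI)
    fix u v assume u: "u \<in> words_over I" and v: "v \<in> words_over J"
    have "pair_shuffles \<mu> [u, v] - \<mu> u * \<mu> v = pair_shuffles (tlog \<mu>) [u, v] - tprim (tlog \<mu>) u v"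
      by (rule mixed_moment_defect[of \<mu>, OF m0 u v]) (rule DZ)
    then show "pair_shuffles \<mu> [u, v] = \<mu> u * \<mu> v" using DZ[OF u v] by simp
  qed
qed

lemma words_over_eq: "words_over I = insert [] (words_in I)"
  by (auto simp: words_over_def words_in_def)

section \<open>Signature-valued random variables\<close>

lemma grouplike_wg_signature:
  assumes "x \<in> wg_signatures p"
  shows "x [] = 1" "\<And>f g. tfin f \<Longrightarrow> tfin g \<Longrightarrow> tpair x (shuffle f g) = tpair x f * tpair x g"
proof -
  obtain y T where "x = y 0 T" "0 \<le> T" "wg_rough_path p T y"
    using assms by (auto simp: wg_signatures_def)
  then show "x [] = 1" "\<And>f g. tfin f \<Longrightarrow> tfin g \<Longrightarrow> tpair x (shuffle f g) = tpair x f * tpair x g"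
    unfolding wg_rough_path_def by auto
qed

lemma
  fixes f g :: "_ \<Rightarrow> real"
  assumes ps: "pair_sigma_finite M1 M2" and f: "integrable M1 f" and g: "integrable M2 g"
  shows integrable_pair_mult: "integrable (M1 \<Otimes>\<^sub>M M2) (\<lambda>(x, y). f x * g y)"
    and integral_pair_mult: "integral\<^sup>L (M1 \<Otimes>\<^sub>M M2) (\<lambda>(x, y). f x * g y) = integral\<^sup>L M1 f * integral\<^sup>L M2 g"
proof -
  interpret pair_sigma_finite M1 M2 by (rule ps)
  have [measurable]: "f \<in> borel_measurable M1" "g \<in> borel_measurable M2" using f g by auto
  show int: "integrable (M1 \<Otimes>\<^sub>M M2) (\<lambda>(x, y). f x * g y)"
  proof (rule Fubini_integrable)
    show "(\<lambda>(x, y). f x * g y) \<in> borel_measurable (M1 \<Otimes>\<^sub>M M2)" by measurable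
    have "integrable M1 (\<lambda>x. \<bar>f x\<bar> * (\<integral>y. \<bar>g y\<bar> \<partial>M2))"
      using f by (intro integrable_mult_left) auto
    then show "integrable M1 (\<lambda>x. \<integral>y. norm (case (x, y) of (x, y) \<Rightarrow> f x * g y) \<partial>M2)"
      by (simp add: abs_mult)
    show "AE x in M1. integrable M2 (\<lambda>y. case (x, y) of (x, y) \<Rightarrow> f x * g y)"
      using g by simp
  qed
  have "integral\<^sup>L (M1 \<Otimes>\<^sub>M M2) (\<lambda>(x, y). f x * g y) = (\<integral>x. (\<integral>y. f x * g y \<partial>M2) \<partial>M1)"
    using integral_fst[of "\<lambda>x y. f x * g y"] int by simp
  then show "integral\<^sup>L (M1 \<Otimes>\<^sub>M M2) (\<lambda>(x, y). f x * g y) = integral\<^sup>L M1 f * integral\<^sup>L M2 g"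
    by (simp add: integral_mult_left_zero)
qed

locale sig_rv =
  fixes M :: "'a measure" and p :: real and S :: "'a \<Rightarrow> 'd::finite list \<Rightarrow> real"
  assumes ps: "prob_space M"
    and meas: "\<And>w. (\<lambda>\<omega>. S \<omega> w) \<in> borel_measurable M"
    and sig: "\<And>\<omega>. \<omega> \<in> space M \<Longrightarrow> S \<omega> \<in> wg_signatures p"
    and intg: "\<And>f. tfin f \<Longrightarrow> integrable M (\<lambda>\<omega>. tpair (S \<omega>) f)"
begin

definition mu :: "'d list \<Rightarrow> real" where "mu = (\<lambda>w. integral\<^sup>L M (\<lambda>\<omega>. S \<omega> w))"

definition marginal :: "'d list set \<Rightarrow> ('d list \<Rightarrow> real) measure" where
  "marginal A = distr M (PiM A (\<lambda>_. borel)) (\<lambda>\<omega>. restrict (S \<omega>) A)"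

lemma sig_Nil: "\<omega> \<in> space M \<Longrightarrow> S \<omega> [] = 1"
  using grouplike_wg_signature(1)[OF sig] .

lemma pair_shuffles_sig: "\<omega> \<in> space M \<Longrightarrow> pair_shuffles (S \<omega>) ws = prod_list (map (S \<omega>) ws)"
  using pair_shuffles_grouplike[OF grouplike_wg_signature(1)[OF sig] grouplike_wg_signature(2)[OF sig]] by blast

lemma integrable_sig: "integrable M (\<lambda>\<omega>. S \<omega> w)"
  using intg[OF tfin_ew[of w]] by (simp add: tpair_ew)

lemma mu_Nil: "mu [] = 1"
proof -
  have "mu [] = integral\<^sup>L M (\<lambda>\<omega>. 1)"
    unfolding mu_def by (rule Bochner_Integration.integral_cong) (auto simp: sig_Nil)
  then show ?thesis using prob_space.prob_space[OF ps] by simp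
qed

lemma pair_shuffles_mu: "pair_shuffles mu ws = integral\<^sup>L M (\<lambda>\<omega>. prod_list (map (S \<omega>) ws))"
proof -
  have "pair_shuffles mu ws = (\<Sum>w\<in>words_len (total_length ws). integral\<^sup>L M (\<lambda>\<omega>. S \<omega> w * shuffle_words ws w))"
    by (simp add: pair_shuffles_def mu_def)
  also have "\<dots> = integral\<^sup>L M (\<lambda>\<omega>. \<Sum>w\<in>words_len (total_length ws). S \<omega> w * shuffle_words ws w)"
    by (rule Bochner_Integration.integral_sum[symmetric]) (simp add: integrable_sig)
  also have "\<dots> = integral\<^sup>L M (\<lambda>\<omega>. prod_list (map (S \<omega>) ws))"
    by (rule Bochner_Integration.integral_cong) (simp_all add: pair_shuffles_sig[symmetric] pair_shuffles_def)
  finally show ?thesis .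
qed

lemma block_moments_genmom: "block_moments mu ws a = genmom M S ws a"
  unfolding block_moments_def genmom_def
proof (rule prod.cong[OF refl])
  fix B :: "(nat \<times> nat) set"
  let ?J = "{j. j < length ws \<and> (\<exists>p. (j, p) \<in> B)}"
  have "(\<Prod>j<length ws. S \<omega> (blockword ws B j)) = (\<Prod>j\<in>?J. S \<omega> (blockword ws B j))"
    if "\<omega> \<in> space M" for \<omega>
    by (rule prod.mono_neutral_right) (use sig_Nil[OF that] in \<open>auto simp: blockword_def\<close>)
  then show "pair_shuffles mu (map (blockword ws B) [0..<length ws]) =
      integral\<^sup>L M (\<lambda>\<omega>. \<Prod>j\<in>?J. S \<omega> (blockword ws B j))"
    by (simp add: pair_shuffles_mu prod.distinct_set_conv_list[symmetric] atLeast0LessThan o_def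
        cong: Bochner_Integration.integral_cong)
qed

lemma compensated_moments:
  assumes "taus \<noteq> []" "\<forall>\<tau>\<in>set taus. \<tau> \<noteq> []"
  shows "tpair (tlog mu) (shuffle_list (map ew taus)) =
        (\<Sum>a\<in>Orp (wposet taus) wle.
           (-1) ^ (card a - 1) * real (opfact (wposet taus) wle a) / real (card a)
           * genmom M S taus a)"
proof -
  have "(0, 0) \<in> wposet taus" using assms by (cases taus) (auto simp: wposet_def)
  then have ne: "wposet taus \<noteq> {}" by auto
  have "tpair (tlog mu) (shuffle_list (map ew taus)) = pair_shuffles (tlog mu) taus"
    by (simp add: tpair_shuffle_words[symmetric] shuffle_words_def)
  also have "\<dots> = (\<Sum>a\<in>Orp (wposet taus) wle.
      (-1) ^ (card a - 1) * real (opfact (wposet taus) wle a) / real (card a) * block_moments mu taus a)"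
    by (rule pair_shuffles_tlog_Orp[of mu, OF mu_Nil ne])
  finally show ?thesis by (simp add: block_moments_genmom)
qed

lemma indep_imp_factorises:
  assumes ind: "prob_space.indep_var M (PiM (words_in I) (\<lambda>_. borel)) (\<lambda>\<omega>. restrict (S \<omega>) (words_in I))
            (PiM (words_in J) (\<lambda>_. borel)) (\<lambda>\<omega>. restrict (S \<omega>) (words_in J))"
    and u: "u \<in> words_over I" and v: "v \<in> words_over J"
  shows "pair_shuffles mu [u, v] = mu u * mu v"
proof (cases "u = [] \<or> v = []")
  case True
  then show ?thesis using mu_Nil by (auto simp: pair_shuffles_Nil_left pair_shuffles_Nil_right)
next
  case False
  interpret prob_space M by (rule ps)
  have uI: "u \<in> words_in I" and vJ: "v \<in> words_in J" using u v False by (auto simp: words_over_eq)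
  have "indep_var borel ((\<lambda>f. f u) \<circ> (\<lambda>\<omega>. restrict (S \<omega>) (words_in I)))
      borel ((\<lambda>f. f v) \<circ> (\<lambda>\<omega>. restrict (S \<omega>) (words_in J)))"
    by (rule indep_var_compose[OF ind]) (simp_all add: measurable_component_singleton uI vJ)
  then have "indep_var borel (\<lambda>\<omega>. S \<omega> u) borel (\<lambda>\<omega>. S \<omega> v)"
    using uI vJ by (simp add: o_def)
  then have "integral\<^sup>L M (\<lambda>\<omega>. S \<omega> u * S \<omega> v) = mu u * mu v"
    unfolding mu_def by (rule indep_var_lebesgue_integral[OF _ integrable_sig integrable_sig])
  then show ?thesis by (simp add: pair_shuffles_mu)
qed

lemma measurable_restrict_sig: "(\<lambda>\<omega>. restrict (S \<omega>) A) \<in> measurable M (PiM A (\<lambda>_. borel))"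
  by (rule measurable_restrict) (rule meas)

lemma prob_space_marginal: "prob_space (marginal A)"
  unfolding marginal_def by (rule prob_space.prob_space_distr[OF ps measurable_restrict_sig])

text \<open>\<open>mixfun\<close> reads the empty word as the constant \<open>1\<close>, matching \<open>S \<omega> [] = 1\<close>.\<close>

lemma marginal_moment:
  assumes \<tau>: "\<tau> \<in> insert [] A"
  shows "integrable (marginal A) (\<lambda>y. if \<tau> = [] then 1 else y \<tau>)"
    and "integral\<^sup>L (marginal A) (\<lambda>y. if \<tau> = [] then 1 else y \<tau>) = mu \<tau>"
proof -
  have meas_coord: "(\<lambda>y. if \<tau> = [] then 1 else y \<tau>) \<in> borel_measurable (PiM A (\<lambda>_. borel :: real measure))"
    using \<tau> by (cases "\<tau> = []") (simp_all add: measurable_component_singleton)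
  have coord: "(if \<tau> = [] then 1 else restrict (S \<omega>) A \<tau>) = S \<omega> \<tau>" if "\<omega> \<in> space M" for \<omega>
    using \<tau> sig_Nil[OF that] by auto
  have "integrable M (\<lambda>\<omega>. if \<tau> = [] then 1 else restrict (S \<omega>) A \<tau>)"
    using integrable_sig[of \<tau>] by (rule Bochner_Integration.integrable_cong[THEN iffD1, OF refl, rotated])
      (simp add: coord)
  then show "integrable (marginal A) (\<lambda>y. if \<tau> = [] then 1 else y \<tau>)"
    unfolding marginal_def by (subst integrable_distr_eq[OF measurable_restrict_sig meas_coord])
  have "integral\<^sup>L (marginal A) (\<lambda>y. if \<tau> = [] then 1 else y \<tau>)
      = integral\<^sup>L M (\<lambda>\<omega>. if \<tau> = [] then 1 else restrict (S \<omega>) A \<tau>)"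
    unfolding marginal_def by (rule integral_distr[OF measurable_restrict_sig meas_coord])
  also have "\<dots> = mu \<tau>"
    unfolding mu_def by (rule Bochner_Integration.integral_cong) (simp_all add: coord)
  finally show "integral\<^sup>L (marginal A) (\<lambda>y. if \<tau> = [] then 1 else y \<tau>) = mu \<tau>" .
qed

lemma mixed_moment_marginal_product:
  assumes "\<tau>1 \<in> insert [] (words_in I)" "\<tau>2 \<in> insert [] (words_in J)"
  shows "integrable (marginal (words_in I) \<Otimes>\<^sub>M marginal (words_in J)) (mixfun \<tau>1 \<tau>2)"
    and "integral\<^sup>L (marginal (words_in I) \<Otimes>\<^sub>M marginal (words_in J)) (mixfun \<tau>1 \<tau>2) = mu \<tau>1 * mu \<tau>2"
proof -
  have eq: "mixfun \<tau>1 \<tau>2 = (\<lambda>(y, z). (if \<tau>1 = [] then 1 else y \<tau>1) * (if \<tau>2 = [] then 1 else z \<tau>2))"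
    by (auto simp: mixfun_def)
  have "pair_sigma_finite (marginal (words_in I)) (marginal (words_in J))"
    by (intro pair_sigma_finite.intro prob_space_imp_sigma_finite prob_space_marginal)
  from integrable_pair_mult[OF this marginal_moment(1)[OF assms(1)] marginal_moment(1)[OF assms(2)]]
    integral_pair_mult[OF this marginal_moment(1)[OF assms(1)] marginal_moment(1)[OF assms(2)]]
  show "integrable (marginal (words_in I) \<Otimes>\<^sub>M marginal (words_in J)) (mixfun \<tau>1 \<tau>2)"
    and "integral\<^sup>L (marginal (words_in I) \<Otimes>\<^sub>M marginal (words_in J)) (mixfun \<tau>1 \<tau>2) = mu \<tau>1 * mu \<tau>2"
    unfolding eq marginal_moment(2)[OF assms(1)] marginal_moment(2)[OF assms(2)] by simp_all
qed

lemma factorises_imp_indep: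
  assumes det: "\<forall>Q. prob_space Q \<longrightarrow>
             sets Q = sets (PiM (words_in I) (\<lambda>_. borel) \<Otimes>\<^sub>M PiM (words_in J) (\<lambda>_. borel)) \<longrightarrow>
             (\<forall>\<tau>1\<in>insert [] (words_in I). \<forall>\<tau>2\<in>insert [] (words_in J).
                integrable Q (mixfun \<tau>1 \<tau>2) \<and>
                integral\<^sup>L Q (mixfun \<tau>1 \<tau>2) = integral\<^sup>L M (\<lambda>\<omega>. S \<omega> \<tau>1 * S \<omega> \<tau>2)) \<longrightarrow>
             Q = distr M (PiM (words_in I) (\<lambda>_. borel) \<Otimes>\<^sub>M PiM (words_in J) (\<lambda>_. borel))
                   (\<lambda>\<omega>. (restrict (S \<omega>) (words_in I), restrict (S \<omega>) (words_in J)))"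
    and fac: "\<forall>u\<in>words_over I. \<forall>v\<in>words_over J. pair_shuffles mu [u, v] = mu u * mu v"
  shows "prob_space.indep_var M (PiM (words_in I) (\<lambda>_. borel)) (\<lambda>\<omega>. restrict (S \<omega>) (words_in I))
            (PiM (words_in J) (\<lambda>_. borel)) (\<lambda>\<omega>. restrict (S \<omega>) (words_in J))"
proof -
  interpret prob_space M by (rule ps)
  let ?Q = "marginal (words_in I) \<Otimes>\<^sub>M marginal (words_in J)"
  interpret marginals: pair_prob_space "marginal (words_in I)" "marginal (words_in J)"
    by (simp add: pair_prob_space_def pair_sigma_finite_def prob_space_imp_sigma_finite prob_space_marginal)
  have "prob_space ?Q" by unfold_locales
  moreover have "sets ?Q = sets (PiM (words_in I) (\<lambda>_. borel) \<Otimes>\<^sub>M PiM (words_in J) (\<lambda>_. borel))"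
    by (rule sets_pair_measure_cong) (simp_all add: marginal_def)
  moreover have "integral\<^sup>L M (\<lambda>\<omega>. S \<omega> \<tau>1 * S \<omega> \<tau>2) = mu \<tau>1 * mu \<tau>2"
    if "\<tau>1 \<in> insert [] (words_in I)" "\<tau>2 \<in> insert [] (words_in J)" for \<tau>1 \<tau>2
  proof -
    have "integral\<^sup>L M (\<lambda>\<omega>. S \<omega> \<tau>1 * S \<omega> \<tau>2) = pair_shuffles mu [\<tau>1, \<tau>2]"
      by (simp add: pair_shuffles_mu)
    also have "\<dots> = mu \<tau>1 * mu \<tau>2" using fac that unfolding words_over_eq by blast
    finally show ?thesis .
  qed
  ultimately have "?Q = distr M (PiM (words_in I) (\<lambda>_. borel) \<Otimes>\<^sub>M PiM (words_in J) (\<lambda>_. borel))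
      (\<lambda>\<omega>. (restrict (S \<omega>) (words_in I), restrict (S \<omega>) (words_in J)))"
    using det mixed_moment_marginal_product by simp
  then show ?thesis
    unfolding indep_var_distribution_eq marginal_def
    using measurable_restrict_sig[of "words_in I"] measurable_restrict_sig[of "words_in J"] by simp
qed

lemma indep_iff_cross_cumulants_vanish:
  assumes "\<forall>Q. prob_space Q \<longrightarrow>
             sets Q = sets (PiM (words_in I) (\<lambda>_. borel) \<Otimes>\<^sub>M PiM (words_in J) (\<lambda>_. borel)) \<longrightarrow>
             (\<forall>\<tau>1\<in>insert [] (words_in I). \<forall>\<tau>2\<in>insert [] (words_in J).
                integrable Q (mixfun \<tau>1 \<tau>2) \<and>
                integral\<^sup>L Q (mixfun \<tau>1 \<tau>2) = integral\<^sup>L M (\<lambda>\<omega>. S \<omega> \<tau>1 * S \<omega> \<tau>2)) \<longrightarrow>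
             Q = distr M (PiM (words_in I) (\<lambda>_. borel) \<Otimes>\<^sub>M PiM (words_in J) (\<lambda>_. borel))
                   (\<lambda>\<omega>. (restrict (S \<omega>) (words_in I), restrict (S \<omega>) (words_in J)))"
  shows "prob_space.indep_var M
            (PiM (words_in I) (\<lambda>_. borel)) (\<lambda>\<omega>. restrict (S \<omega>) (words_in I))
            (PiM (words_in J) (\<lambda>_. borel)) (\<lambda>\<omega>. restrict (S \<omega>) (words_in J))
         \<longleftrightarrow> (\<forall>\<tau>1\<in>words_in I. \<forall>\<tau>2\<in>words_in J. tpair (tlog mu) (shuffle (ew \<tau>1) (ew \<tau>2)) = 0)"
proof -
  have "(\<forall>\<tau>1\<in>words_in I. \<forall>\<tau>2\<in>words_in J. tpair (tlog mu) (shuffle (ew \<tau>1) (ew \<tau>2)) = 0) \<longleftrightarrow>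
      (\<forall>u\<in>words_over I. \<forall>v\<in>words_over J. pair_shuffles mu [u, v] = mu u * mu v)"
    unfolding factorises_iff_cross_cumulants_vanish[of mu, OF mu_Nil]
    by (auto simp: tpair_shuffle_ew_ew words_over_eq words_in_def)
  then show ?thesis
    using indep_imp_factorises factorises_imp_indep[OF assms] by blast
qed

end

theorem theorem3p6:
  fixes M :: "'a measure" and p :: real
    and S :: "'a \<Rightarrow> 'd::finite list \<Rightarrow> real"
  assumes "prob_space M"
    and "1 \<le> p"
    and "\<And>w. (\<lambda>\<omega>. S \<omega> w) \<in> borel_measurable M"
    and "\<And>\<omega>. \<omega> \<in> space M \<Longrightarrow> S \<omega> \<in> wg_signatures p"
    and "\<And>f. tfin f \<Longrightarrow> integrable M (\<lambda>\<omega>. tpair (S \<omega>) f)"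
  defines "\<mu> \<equiv> (\<lambda>w. integral\<^sup>L M (\<lambda>\<omega>. S \<omega> w))"
  defines "\<kappa> \<equiv> tlog \<mu>"
  shows
    "(\<forall>taus. taus \<noteq> [] \<and> (\<forall>\<tau>\<in>set taus. \<tau> \<noteq> []) \<longrightarrow>
        tpair \<kappa> (shuffle_list (map ew taus)) =
        (\<Sum>a\<in>Orp (wposet taus) wle.
           (-1) ^ (card a - 1) * real (opfact (wposet taus) wle a) / real (card a)
           * genmom M S taus a))
   \<and> (\<forall>\<tau>. \<tau> \<noteq> [] \<longrightarrow>
        tpair \<mu> (ew \<tau>) =
        (\<Sum>a\<in>Orp (wposet [\<tau>]) wle.
           1 / fact (card a) * (\<Prod>B\<in>a. tpair \<kappa> (ew (blockword [\<tau>] B 0)))))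
   \<and> (\<forall>I J :: 'd set.
        (\<forall>Q. prob_space Q \<longrightarrow>
             sets Q = sets (PiM (words_in I) (\<lambda>_. borel) \<Otimes>\<^sub>M PiM (words_in J) (\<lambda>_. borel)) \<longrightarrow>
             (\<forall>\<tau>1\<in>insert [] (words_in I). \<forall>\<tau>2\<in>insert [] (words_in J).
                integrable Q (mixfun \<tau>1 \<tau>2) \<and>
                integral\<^sup>L Q (mixfun \<tau>1 \<tau>2) = integral\<^sup>L M (\<lambda>\<omega>. S \<omega> \<tau>1 * S \<omega> \<tau>2)) \<longrightarrow>
             Q = distr M (PiM (words_in I) (\<lambda>_. borel) \<Otimes>\<^sub>M PiM (words_in J) (\<lambda>_. borel))
                   (\<lambda>\<omega>. (restrict (S \<omega>) (words_in I), restrict (S \<omega>) (words_in J))))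
        \<longrightarrow>
        (prob_space.indep_var M
            (PiM (words_in I) (\<lambda>_. borel)) (\<lambda>\<omega>. restrict (S \<omega>) (words_in I))
            (PiM (words_in J) (\<lambda>_. borel)) (\<lambda>\<omega>. restrict (S \<omega>) (words_in J))
         \<longleftrightarrow> (\<forall>\<tau>1\<in>words_in I. \<forall>\<tau>2\<in>words_in J.
                 tpair \<kappa> (shuffle (ew \<tau>1) (ew \<tau>2)) = 0)))"
proof -
  interpret sig_rv M p S
    unfolding sig_rv_def using assms(1,3-5) by blast
  have \<mu>: "\<mu> = mu" and \<kappa>: "\<kappa> = tlog mu"
    by (simp_all add: \<mu>_def \<kappa>_def mu_def)
  show ?thesis
    unfolding \<mu> \<kappa>
    using compensated_moments moment_from_cumulants[of mu, OF mu_Nil] indep_iff_cross_cumulants_vanish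
    by blast
qed

end
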